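(* In the setting below, $r_{\mathcal G}(t)/\sqrt{J_{\mathcal G}(t)}\to1$ as $t\nearrow T$.
   Context: Setting: let $d\in\{2,3\}$, $n\ge2$, masses $m_1,\dots,m_n>0$, and let $q(t)=(q_1(t),\dots,q_n(t))$, $q_i(t)\in\mathbb{R}^d$, be a solution on $[t_0,T)$ of $m_i\ddot q_i=\partial U/\partial q_i$, $U(q)=\sum_{i<j}m_im_j/|q_i-q_j|$, with $q_i(t)\ne q_j(t)$ for $i\ne j$, $t<T$, such that every limit $L_i=\lim_{t\nearrow T}q_i(t)$ exists. Let $\mathcal G\subset\{1,\dots,n\}$ be a cluster with at least two elements: $L_i=L_j=:L_{\mathcal G}$ for $i,j\in\mathcal G$ and $L_j\neq L_{\mathcal G}$ for $j\notin\mathcal G$. Notation: $c_{\mathcal G}=(\sum_{i\in\mathcal G}m_i)^{-1}\sum_{i\in\mathcal G}m_iq_i$, $J_{\mathcal G}=\sum_{i\in\mathcal G}m_i|q_i-L_i|^2$, $r_{\mathcal G}=\sqrt{\sum_{i\in\mathcal G}m_i|q_i-c_{\mathcal G}|^2}$. *)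

theory Defs
  imports "HOL-Analysis.Analysis"
begin

definition potential :: "nat \<Rightarrow> (nat \<Rightarrow> real) \<Rightarrow> (nat \<Rightarrow> real^'d) \<Rightarrow> real" where
  "potential n m x = (\<Sum>i<n. \<Sum>j\<in>{i<..<n}. m i * m j / norm (x i - x j))"

definition partial_grad_U ::
  "nat \<Rightarrow> (nat \<Rightarrow> real) \<Rightarrow> (nat \<Rightarrow> real^'d) \<Rightarrow> nat \<Rightarrow> real^'d \<Rightarrow> bool" where
  "partial_grad_U n m x i g \<longleftrightarrow>
     ((\<lambda>y. potential n m (x(i := y))) has_derivative (\<lambda>h. g \<bullet> h)) (at (x i))"

definition cluster_center :: "(nat \<Rightarrow> real) \<Rightarrow> nat set \<Rightarrow> (nat \<Rightarrow> real^'d) \<Rightarrow> real^'d" where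
  "cluster_center m G x = inverse (\<Sum>i\<in>G. m i) *\<^sub>R (\<Sum>i\<in>G. m i *\<^sub>R x i)"

definition cluster_J :: "(nat \<Rightarrow> real) \<Rightarrow> nat set \<Rightarrow> (nat \<Rightarrow> real^'d) \<Rightarrow> (nat \<Rightarrow> real^'d) \<Rightarrow> real" where
  "cluster_J m G L x = (\<Sum>i\<in>G. m i * (norm (x i - L i))\<^sup>2)"

definition cluster_r :: "(nat \<Rightarrow> real) \<Rightarrow> nat set \<Rightarrow> (nat \<Rightarrow> real^'d) \<Rightarrow> real" where
  "cluster_r m G x = sqrt (\<Sum>i\<in>G. m i * (norm (x i - cluster_center m G x))\<^sup>2)"

end

theory Submission
  imports Defs
begin

text \<open>Let \<open>I\<close> be the moment of inertia of the cluster about its centre of mass \<open>c\<close>, of total mass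
  \<open>M\<close>. By the parallel axis theorem \<open>J = I + M |c - L|\<^sup>2\<close> and \<open>r = \<surd>I\<close>, so it suffices that
  \<open>M |c - L|\<^sup>2 / I \<rightarrow> 0\<close>. The other bodies stay at positive distance, so the acceleration of
  \<open>c\<close> is bounded and \<open>|c - L| = O(T - t)\<close>. On the other hand \<open>I \<ge> A (T - t)\<^sup>2\<close> near \<open>T\<close> for
  every \<open>A\<close>: by the Lagrange--Jacobi identity \<open>I'' = 4K - 2U + O(1)\<close>, and a Gronwall argument for
  the Lyapunov function \<open>E + \<Lambda> I I'\<close> (\<open>E = K - U\<close> the energy of the cluster, \<open>\<Lambda>\<close> a Lipschitz
  constant of the external field) shows \<open>K \<ge> 2U/3 + O(1)\<close>. Hence \<open>I'' \<ge> 2U/3 + O(1) \<rightarrow> \<infinity>\<close>,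
  and a nonnegative function vanishing at \<open>T\<close> with \<open>I'' \<ge> 2A\<close> is at least \<open>A (T - t)\<^sup>2\<close>.\<close>

section \<open>Differential inequalities on an interval \<open>[t\<^sub>1, T)\<close>\<close>

lemma has_derivative_inverse_norm:
  fixes f :: "'a::real_normed_vector \<Rightarrow> 'b::real_inner"
  assumes "(f has_derivative f') (at x within s)" "f x \<noteq> 0"
  shows "((\<lambda>x. 1 / norm (f x)) has_derivative (\<lambda>h. - (f x \<bullet> f' h) / norm (f x) ^ 3)) (at x within s)"
proof -
  have nz: "norm (f x) \<noteq> 0"
    using assms(2) by simp
  have "((\<lambda>x. inverse (norm (f x))) has_derivative
      (\<lambda>h. - (inverse (norm (f x)) * (f' h \<bullet> sgn (f x)) * inverse (norm (f x))))) (at x within s)"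
    using Deriv.has_derivative_inverse[OF nz has_derivative_compose[OF assms(1) has_derivative_norm[OF assms(2)]]] .
  moreover have "(\<lambda>h. - (inverse (norm (f x)) * (f' h \<bullet> sgn (f x)) * inverse (norm (f x))))
      = (\<lambda>h. - (f x \<bullet> f' h) / norm (f x) ^ 3)"
    using nz by (auto simp: sgn_div_norm field_simps power3_eq_cube inner_commute)
  ultimately show ?thesis
    by (simp add: divide_inverse)
qed

lemma has_vector_derivative_inverse_norm:
  fixes z :: "real \<Rightarrow> 'a::real_inner"
  assumes "(z has_vector_derivative z') (at x within s)" "z x \<noteq> 0"
  shows "((\<lambda>x. 1 / norm (z x)) has_vector_derivative (- (z x \<bullet> z') / norm (z x) ^ 3)) (at x within s)"
  using has_derivative_inverse_norm[OF assms(1)[unfolded has_vector_derivative_def] assms(2)]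
  unfolding has_vector_derivative_def
  by (rule has_derivative_eq_rhs) (auto simp: field_simps)

lemma has_vector_derivative_inner:
  assumes "(f has_vector_derivative f') (at x within s)" "(g has_vector_derivative g') (at x within s)"
  shows "((\<lambda>x. f x \<bullet> g x) has_vector_derivative (f x \<bullet> g' + f' \<bullet> g x)) (at x within s)"
  using bounded_bilinear.has_vector_derivative[OF bounded_bilinear_inner assms] by simp

lemma real_mvt_subinterval:
  fixes f f' :: "real \<Rightarrow> real"
  assumes "a \<le> b" "{a..b} \<subseteq> S"
    and "\<And>s. s \<in> S \<Longrightarrow> (f has_real_derivative f' s) (at s within S)"
  shows "\<exists>\<xi>\<in>{a..b}. f b - f a = f' \<xi> * (b - a)"
proof -
  have "(f has_derivative (\<lambda>h. f' s * h)) (at s within {a..b})" if "s \<in> {a..b}" for s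
    using has_derivative_subset[OF assms(3)[unfolded has_field_derivative_def] assms(2)] that assms(2)
    by auto
  then have "\<exists>\<xi>\<in>{a..b}. f b - f a = (\<lambda>h. f' \<xi> * h) (b - a)"
    by (intro mvt_very_simple[OF assms(1)]) auto
  then show ?thesis
    by auto
qed

lemma diff_ge_of_derivative_ge:
  fixes f f' :: "real \<Rightarrow> real"
  assumes "a \<le> b" "{a..b} \<subseteq> S"
    and "\<And>s. s \<in> S \<Longrightarrow> (f has_real_derivative f' s) (at s within S)"
    and "\<And>s. s \<in> {a..b} \<Longrightarrow> c \<le> f' s"
  shows "c * (b - a) \<le> f b - f a"
proof -
  obtain \<xi> where "\<xi> \<in> {a..b}" "f b - f a = f' \<xi> * (b - a)"
    using real_mvt_subinterval[OF assms(1-3)] by blast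
  then show ?thesis
    using assms(1,4) by (simp add: mult_right_mono)
qed

lemma norm_diff_le_of_vector_derivative_bound:
  fixes f :: "real \<Rightarrow> 'a::real_normed_vector"
  assumes "convex S" "\<And>s. s \<in> S \<Longrightarrow> (f has_vector_derivative f' s) (at s within S)"
    and "\<And>s. s \<in> S \<Longrightarrow> norm (f' s) \<le> B" "x \<in> S" "y \<in> S"
  shows "norm (f x - f y) \<le> B * \<bar>x - y\<bar>"
proof -
  have "B \<ge> 0"
    using assms(3)[OF assms(4)] norm_ge_zero order_trans by blast
  then have "norm (f x - f y) \<le> B * norm (x - y)"
    using assms
    by (intro differentiable_bound[OF assms(1)])
      (auto simp: has_vector_derivative_def mult.commute[of B] intro!: onorm_bound mult_left_mono)
  then show ?thesis
    by simp
qed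

text \<open>A Gronwall-type estimate at a negative minimum point \<open>u\<close>: there \<open>f' \<ge> -a + \<beta> f u\<close> on
  \<open>[t1, u]\<close>, and integrating over an interval of length \<open>\<le> 1/(2\<beta>)\<close> gives
  \<open>f u \<ge> f t1 - a (T - t1) + f u / 2\<close>.\<close>
lemma differential_inequality_negative_minimum:
  fixes f f' b :: "real \<Rightarrow> real"
  assumes der: "\<And>t. t \<in> {t1..<T} \<Longrightarrow> (f has_real_derivative f' t) (at t within {t1..<T})"
    and ineq: "\<And>t. t \<in> {t1..<T} \<Longrightarrow> - a + b t * f t \<le> f' t"
    and b_nonneg: "\<And>t. t \<in> {t1..<T} \<Longrightarrow> 0 \<le> b t"
    and b_le: "\<And>t. t \<in> {t1..<T} \<Longrightarrow> b t \<le> \<beta>"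
    and short: "\<beta> * (T - t1) \<le> 1/2" and "0 \<le> a"
    and u: "u \<in> {t1..<T}" and u_min: "\<And>s. s \<in> {t1..u} \<Longrightarrow> f u \<le> f s" and "f u < 0"
  shows "2 * (f t1 - a * (T - t1)) \<le> f u"
proof -
  have "\<beta> \<ge> 0"
    using b_nonneg[of t1] b_le[of t1] u by auto
  have "-a + \<beta> * f u \<le> f' s" if "s \<in> {t1..u}" for s
  proof -
    have s: "s \<in> {t1..<T}"
      using that u by auto
    have "\<beta> * f u \<le> b s * f u"
      using b_le[OF s] \<open>f u < 0\<close> by (simp add: mult_right_mono_neg)
    also have "\<dots> \<le> b s * f s"
      using u_min[OF that] b_nonneg[OF s] by (simp add: mult_left_mono)
    finally show ?thesis
      using ineq[OF s] by linarith
  qed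
  then have "(-a + \<beta> * f u) * (u - t1) \<le> f u - f t1"
    using u by (intro diff_ge_of_derivative_ge[OF _ _ der]) auto
  moreover have "(-a + \<beta> * f u) * (T - t1) \<le> (-a + \<beta> * f u) * (u - t1)"
  proof (rule mult_left_mono_neg)
    show "-a + \<beta> * f u \<le> 0"
      using \<open>0 \<le> a\<close> mult_nonneg_nonpos[OF \<open>\<beta> \<ge> 0\<close>, of "f u"] \<open>f u < 0\<close> by linarith
  qed (use u in auto)
  moreover have "f u / 2 \<le> \<beta> * (T - t1) * f u"
    using mult_right_mono_neg[OF short, of "f u"] \<open>f u < 0\<close> by simp
  ultimately show ?thesis
    by (simp add: algebra_simps)
qed

lemma differential_inequality_lower_bound:
  fixes f f' b :: "real \<Rightarrow> real"
  assumes der: "\<And>t. t \<in> {t1..<T} \<Longrightarrow> (f has_real_derivative f' t) (at t within {t1..<T})"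
    and "\<And>t. t \<in> {t1..<T} \<Longrightarrow> - a + b t * f t \<le> f' t"
    and "\<And>t. t \<in> {t1..<T} \<Longrightarrow> 0 \<le> b t" "\<And>t. t \<in> {t1..<T} \<Longrightarrow> b t \<le> \<beta>"
    and "\<beta> * (T - t1) \<le> 1/2" "0 \<le> a"
    and t: "t \<in> {t1..<T}"
  shows "min 0 (2 * (f t1 - a * (T - t1))) \<le> f t"
proof -
  have cont: "continuous_on {t1..t} f"
    using t by (intro continuous_on_subset[OF DERIV_continuous_on[OF der]]) auto
  then obtain u where u: "u \<in> {t1..t}" and u_min: "\<And>s. s \<in> {t1..t} \<Longrightarrow> f u \<le> f s"
    using continuous_attains_inf[OF compact_Icc _ cont] t by auto
  show ?thesis
  proof (cases "0 \<le> f u")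
    case False
    then have "2 * (f t1 - a * (T - t1)) \<le> f u"
      using u t u_min assms by (intro differential_inequality_negative_minimum[of t1 T f f' a b \<beta>]) auto
    then show ?thesis
      using u_min[of t] t by auto
  qed (use u_min[of t] t in auto)
qed

lemma derivative_nonpos_of_nonneg_tendsto_0:
  fixes I D :: "real \<Rightarrow> real"
  assumes dI: "\<And>s. s \<in> {t1..<T} \<Longrightarrow> (I has_real_derivative D s) (at s within {t1..<T})"
    and D_mono: "\<And>s u. s \<in> {t1..<T} \<Longrightarrow> u \<in> {s..<T} \<Longrightarrow> D s \<le> D u"
    and I_nonneg: "\<And>s. s \<in> {t1..<T} \<Longrightarrow> 0 \<le> I s" and I_lim: "(I \<longlongrightarrow> 0) (at_left T)"
    and s: "s \<in> {t1..<T}"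
  shows "D s \<le> 0"
proof (rule ccontr)
  assume "\<not> D s \<le> 0"
  have "eventually (\<lambda>u. D s * (u - s) \<le> I u) (at_left T)"
    using eventually_at_left_real[of s T] s
  proof (rule_tac eventually_mono)
    fix u assume u: "u \<in> {s<..<T}"
    have "D s * (u - s) \<le> I u - I s"
      using u s D_mono[OF s] by (intro diff_ge_of_derivative_ge[OF _ _ dI]) auto
    then show "D s * (u - s) \<le> I u"
      using I_nonneg[OF s] by linarith
  qed auto
  moreover have "((\<lambda>u. D s * (u - s)) \<longlongrightarrow> D s * (T - s)) (at_left T)"
    by (intro tendsto_intros)
  ultimately have "D s * (T - s) \<le> 0"
    using tendsto_le[OF trivial_limit_at_left_real I_lim] by blast
  then show False
    using \<open>\<not> D s \<le> 0\<close> s by (simp add: mult_le_0_iff)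
qed

text \<open>Since \<open>D\<close> is nonpositive and grows at rate \<open>\<ge> 2A\<close>, \<open>D s \<le> -2A (T - s)\<close>; hence
  \<open>I t - A (T - t)\<^sup>2\<close> is nonincreasing, with limit \<open>0\<close>.\<close>
lemma convex_vanishing_at_left_lower_bound:
  fixes I D D' :: "real \<Rightarrow> real"
  assumes dI: "\<And>s. s \<in> {t1..<T} \<Longrightarrow> (I has_real_derivative D s) (at s within {t1..<T})"
    and dD: "\<And>s. s \<in> {t1..<T} \<Longrightarrow> (D has_real_derivative D' s) (at s within {t1..<T})"
    and D'_ge: "\<And>s. s \<in> {t1..<T} \<Longrightarrow> 2 * A \<le> D' s" and "0 \<le> A"
    and I_nonneg: "\<And>s. s \<in> {t1..<T} \<Longrightarrow> 0 \<le> I s" and I_lim: "(I \<longlongrightarrow> 0) (at_left T)"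
    and t: "t \<in> {t1..<T}"
  shows "A * (T - t)\<^sup>2 \<le> I t"
proof -
  have after: "eventually (\<lambda>u. u \<in> {s<..<T}) (at_left T)" if "s \<in> {t1..<T}" for s
    using that by (intro eventually_at_left_real) auto
  have D_incr: "2 * A * (u - s) \<le> D u - D s" if "s \<in> {t1..<T}" "u \<in> {s..<T}" for s u
    using that D'_ge by (intro diff_ge_of_derivative_ge[OF _ _ dD]) auto
  have "D s \<le> D u" if "s \<in> {t1..<T}" "u \<in> {s..<T}" for s u
    using D_incr[OF that] that \<open>0 \<le> A\<close> by (smt (verit) mult_nonneg_nonneg atLeastLessThan_iff)
  then have D_nonpos: "D s \<le> 0" if "s \<in> {t1..<T}" for s
    using that by (intro derivative_nonpos_of_nonneg_tendsto_0[OF dI _ I_nonneg I_lim])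
  have D_le: "D s \<le> -2 * A * (T - s)" if s: "s \<in> {t1..<T}" for s
  proof -
    have "eventually (\<lambda>u. D s \<le> -2 * A * (u - s)) (at_left T)"
      using after[OF s]
    proof (rule eventually_mono)
      fix u assume "u \<in> {s<..<T}"
      then show "D s \<le> -2 * A * (u - s)"
        using D_incr[of s u] D_nonpos[of u] s by auto
    qed
    moreover have "((\<lambda>u. -2 * A * (u - s)) \<longlongrightarrow> -2 * A * (T - s)) (at_left T)"
      by (intro tendsto_intros)
    ultimately show ?thesis
      using tendsto_le[OF trivial_limit_at_left_real _ tendsto_const] by blast
  qed
  define \<psi> where "\<psi> u = A * (T - u)\<^sup>2 - I u" for u
  have d\<psi>: "(\<psi> has_real_derivative (- 2 * A * (T - u) - D u)) (at u within {t1..<T})"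
    if "u \<in> {t1..<T}" for u
    unfolding \<psi>_def using dI[OF that]
    by (auto intro!: derivative_eq_intros simp: algebra_simps power2_eq_square)
  have "eventually (\<lambda>u. \<psi> t \<le> \<psi> u) (at_left T)"
    using after[OF t]
  proof (rule eventually_mono)
    fix u assume "u \<in> {t<..<T}"
    then have "0 * (u - t) \<le> \<psi> u - \<psi> t"
      using t D_le by (intro diff_ge_of_derivative_ge[OF _ _ d\<psi>]) auto
    then show "\<psi> t \<le> \<psi> u"
      by simp
  qed
  moreover have "(\<psi> \<longlongrightarrow> A * (T - T)\<^sup>2 - 0) (at_left T)"
    unfolding \<psi>_def by (intro tendsto_intros I_lim)
  ultimately have "\<psi> t \<le> 0"
    using tendsto_le[OF trivial_limit_at_left_real _ tendsto_const] by simp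
  then show ?thesis
    by (simp add: \<psi>_def)
qed

lemma two_abs_inner_le:
  fixes x w :: "'a::real_inner"
  assumes "0 < l"
  shows "2 * \<bar>x \<bullet> w\<bar> \<le> l * (x \<bullet> x) + (w \<bullet> w) / l"
proof -
  have "0 \<le> (l *\<^sub>R x - w) \<bullet> (l *\<^sub>R x - w)" "0 \<le> (l *\<^sub>R x + w) \<bullet> (l *\<^sub>R x + w)"
    by simp_all
  then have "l * (2 * \<bar>x \<bullet> w\<bar>) \<le> l * (l * (x \<bullet> x) + (w \<bullet> w) / l)"
    using assms
    by (auto simp: inner_diff_left inner_diff_right inner_add_left inner_add_right inner_commute
        algebra_simps abs_if)
  then show ?thesis
    using assms by simp
qed

lemma eventually_at_left_obtain_interval:
  fixes T t1 :: real
  assumes "eventually P (at_left T)" "t1 < T"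
  obtains t2 where "t1 < t2" "t2 < T" "\<And>t. t \<in> {t2..<T} \<Longrightarrow> P t"
proof -
  obtain b where "b < T" "\<And>t. b < t \<Longrightarrow> t < T \<Longrightarrow> P t"
    using assms(1) unfolding eventually_at_left_field by auto
  then show ?thesis
    using assms(2) by (intro that[of "(max b t1 + T) / 2"]) auto
qed

lemma eventually_lower_bound_of_differential_inequality:
  fixes f f' b :: "real \<Rightarrow> real"
  assumes "t1 < T"
    and der: "\<And>t. t \<in> {t1..<T} \<Longrightarrow> (f has_real_derivative f' t) (at t within {t1..<T})"
    and "eventually (\<lambda>t. - a + b t * f t \<le> f' t \<and> 0 \<le> b t \<and> b t \<le> \<beta>) (at_left T)"
    and "0 \<le> a"
  obtains c where "eventually (\<lambda>t. c \<le> f t) (at_left T)"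
proof -
  have "eventually (\<lambda>t. T - 1 / (2 * (\<bar>\<beta>\<bar> + 1)) < t) (at_left T)"
    by (rule eventually_mono[OF eventually_at_left_real[of "T - 1 / (2 * (\<bar>\<beta>\<bar> + 1))"]])
      (auto simp: add_pos_pos)
  from eventually_conj[OF assms(3) this] obtain t2
    where "t1 < t2" "t2 < T"
      and t2: "\<And>t. t \<in> {t2..<T} \<Longrightarrow> (- a + b t * f t \<le> f' t \<and> 0 \<le> b t \<and> b t \<le> \<beta>)
          \<and> T - 1 / (2 * (\<bar>\<beta>\<bar> + 1)) < t"
    using \<open>t1 < T\<close> by (rule eventually_at_left_obtain_interval) blast
  have "\<beta> * (T - t2) \<le> 1/2"
  proof -
    have "\<beta> * (T - t2) \<le> (\<bar>\<beta>\<bar> + 1) * (1 / (2 * (\<bar>\<beta>\<bar> + 1)))"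
      using t2[of t2] \<open>t2 < T\<close> by (intro mult_mono) auto
    also have "\<dots> = 1/2"
      by (simp add: abs_ge_zero add_nonneg_pos)
    finally show ?thesis .
  qed
  then have "min 0 (2 * (f t2 - a * (T - t2))) \<le> f t" if "t \<in> {t2..<T}" for t
    using that t2 \<open>t1 < t2\<close> \<open>t2 < T\<close> \<open>0 \<le> a\<close>
    by (intro differential_inequality_lower_bound[of t2 T f f' a b \<beta>])
      (auto intro: DERIV_subset[OF der])
  then show ?thesis
    by (intro that[of "min 0 (2 * (f t2 - a * (T - t2)))"]
        eventually_mono[OF eventually_at_left_real[OF \<open>t2 < T\<close>]]) auto
qed

lemma eventually_convex_vanishing_at_left_lower_bound:
  fixes I D D' :: "real \<Rightarrow> real"
  assumes "t1 < T"
    and dI: "\<And>s. s \<in> {t1..<T} \<Longrightarrow> (I has_real_derivative D s) (at s within {t1..<T})"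
    and dD: "\<And>s. s \<in> {t1..<T} \<Longrightarrow> (D has_real_derivative D' s) (at s within {t1..<T})"
    and "eventually (\<lambda>s. 2 * A \<le> D' s) (at_left T)" "0 \<le> A"
    and "\<And>s. s \<in> {t1..<T} \<Longrightarrow> 0 \<le> I s" and "(I \<longlongrightarrow> 0) (at_left T)"
  shows "eventually (\<lambda>t. A * (T - t)\<^sup>2 \<le> I t) (at_left T)"
proof -
  obtain t2 where "t1 < t2" "t2 < T" "\<And>s. s \<in> {t2..<T} \<Longrightarrow> 2 * A \<le> D' s"
    using eventually_at_left_obtain_interval[OF assms(4) \<open>t1 < T\<close>] by blast
  then have "A * (T - t)\<^sup>2 \<le> I t" if "t \<in> {t2..<T}" for t
    using that assms
    by (intro convex_vanishing_at_left_lower_bound[of t2 T I D D' A])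
      (auto intro: DERIV_subset[OF dI] DERIV_subset[OF dD])
  then show ?thesis
    by (intro eventually_mono[OF eventually_at_left_real[OF \<open>t2 < T\<close>]]) auto
qed

lemma eventually_lipschitz_of_derivative_bound:
  fixes f :: "real \<Rightarrow> 'a::real_normed_vector"
  assumes "t1 < T"
    and der: "\<And>t. t \<in> {t1..<T} \<Longrightarrow> (f has_vector_derivative f' t) (at t within {t1..<T})"
    and "eventually (\<lambda>t. norm (f' t) \<le> B) (at_left T)"
  obtains t2 where "t2 < T" "\<And>s t. s \<in> {t2..<T} \<Longrightarrow> t \<in> {t2..<T} \<Longrightarrow> norm (f s - f t) \<le> B * \<bar>s - t\<bar>"
proof -
  obtain t2 where "t1 < t2" "t2 < T" and bound: "\<And>t. t \<in> {t2..<T} \<Longrightarrow> norm (f' t) \<le> B"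
    using eventually_at_left_obtain_interval[OF assms(3,1)] by blast
  show ?thesis
  proof (rule that[OF \<open>t2 < T\<close>])
    fix s t assume "s \<in> {t2..<T}" "t \<in> {t2..<T}"
    then show "norm (f s - f t) \<le> B * \<bar>s - t\<bar>"
      using \<open>t1 < t2\<close> bound der
      by (intro norm_diff_le_of_vector_derivative_bound[of "{t2..<T}" f f'])
        (auto intro: has_vector_derivative_within_subset[OF der])
  qed
qed

lemma norm_diff_limit_le_of_lipschitz:
  fixes f :: "real \<Rightarrow> 'a::real_normed_vector"
  assumes "(f \<longlongrightarrow> l) (at_left T)" "t \<in> {t2..<T}"
    and "\<And>s. s \<in> {t2..<T} \<Longrightarrow> norm (f s - f t) \<le> C * \<bar>s - t\<bar>"
  shows "norm (f t - l) \<le> C * (T - t)"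
proof -
  have "t < T"
    using assms(2) by simp
  have "eventually (\<lambda>s. norm (f s - f t) \<le> C * (s - t)) (at_left T)"
    using eventually_at_left_real[OF \<open>t < T\<close>]
  proof (rule eventually_mono)
    fix s assume "s \<in> {t<..<T}"
    then show "norm (f s - f t) \<le> C * (s - t)"
      using assms(2) assms(3)[of s] by auto
  qed
  moreover have "((\<lambda>s. norm (f s - f t)) \<longlongrightarrow> norm (l - f t)) (at_left T)"
    by (intro tendsto_intros assms(1))
  moreover have "((\<lambda>s. C * (s - t)) \<longlongrightarrow> C * (T - t)) (at_left T)"
    by (intro tendsto_intros)
  ultimately have "norm (l - f t) \<le> C * (T - t)"
    using tendsto_le[OF trivial_limit_at_left_real] by blast
  then show ?thesis
    by (simp add: norm_minus_commute)
qed

section \<open>The Newtonian kernel and the gradient of the potential\<close>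

text \<open>The force on a unit mass at \<open>x\<close> exerted by a unit mass at \<open>x + z\<close>.\<close>
definition newton_kernel :: "'a::real_normed_vector \<Rightarrow> 'a" where
  "newton_kernel z = (1 / norm z ^ 3) *\<^sub>R z"

lemma newton_kernel_minus: "newton_kernel (- z) = - newton_kernel z"
  by (simp add: newton_kernel_def)

lemma newton_kernel_zero [simp]: "newton_kernel 0 = 0"
  by (simp add: newton_kernel_def)

lemma inner_newton_kernel: "(z::'a::real_inner) \<bullet> newton_kernel z = 1 / norm z"
  by (cases "z = 0") (auto simp: newton_kernel_def dot_square_norm power2_eq_square power3_eq_cube)

lemma norm_newton_kernel: "norm (newton_kernel z) = 1 / norm z ^ 2"
  by (cases "z = 0") (auto simp: newton_kernel_def power3_eq_cube power2_eq_square)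

lemma abs_cube_diff_le:
  fixes s u R :: real
  assumes "0 \<le> s" "s \<le> R" "0 \<le> u" "u \<le> R"
  shows "\<bar>u ^ 3 - s ^ 3\<bar> \<le> 3 * R\<^sup>2 * \<bar>u - s\<bar>"
proof -
  have "u\<^sup>2 \<le> R\<^sup>2" "s\<^sup>2 \<le> R\<^sup>2" "u * s \<le> R * R"
    using assms by (auto intro: power_mono mult_mono)
  then have "u\<^sup>2 + u * s + s\<^sup>2 \<le> 3 * R\<^sup>2"
    by (simp add: power2_eq_square)
  moreover have "u ^ 3 - s ^ 3 = (u - s) * (u\<^sup>2 + u * s + s\<^sup>2)"
    by (simp add: power2_eq_square power3_eq_cube algebra_simps)
  then have "\<bar>u ^ 3 - s ^ 3\<bar> = \<bar>u - s\<bar> * (u\<^sup>2 + u * s + s\<^sup>2)"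
    using assms by (simp add: abs_mult)
  ultimately show ?thesis
    by (simp add: mult_left_mono mult.commute)
qed

lemma abs_inverse_cube_diff_le:
  fixes s u R d :: real
  assumes "0 < d" "d \<le> s" "s \<le> R" "d \<le> u" "u \<le> R"
  shows "\<bar>1 / s ^ 3 - 1 / u ^ 3\<bar> \<le> 3 * R\<^sup>2 / d ^ 6 * \<bar>u - s\<bar>"
proof -
  have "s > 0" "u > 0"
    using assms by auto
  then have "\<bar>1 / s ^ 3 - 1 / u ^ 3\<bar> = \<bar>u ^ 3 - s ^ 3\<bar> / (s ^ 3 * u ^ 3)"
    by (simp add: field_simps abs_div)
  also have "\<dots> \<le> (3 * R\<^sup>2 * \<bar>u - s\<bar>) / (d ^ 3 * d ^ 3)"
    using assms \<open>s > 0\<close> \<open>u > 0\<close> abs_cube_diff_le[of s R u]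
    by (intro frac_le mult_mono power_mono) auto
  also have "\<dots> = 3 * R\<^sup>2 / d ^ 6 * \<bar>u - s\<bar>"
    by (simp add: power_add[symmetric])
  finally show ?thesis .
qed

lemma newton_kernel_lipschitz:
  fixes a b :: "'a::real_normed_vector"
  assumes "0 < d" "d \<le> norm a" "norm a \<le> R" "d \<le> norm b" "norm b \<le> R"
  shows "norm (newton_kernel a - newton_kernel b) \<le> (1 / d ^ 3 + 3 * R ^ 3 / d ^ 6) * norm (a - b)"
proof -
  have "newton_kernel a - newton_kernel b
      = (1 / norm a ^ 3) *\<^sub>R (a - b) + (1 / norm a ^ 3 - 1 / norm b ^ 3) *\<^sub>R b"
    by (simp add: newton_kernel_def algebra_simps)
  then have "norm (newton_kernel a - newton_kernel b)
      \<le> 1 / norm a ^ 3 * norm (a - b) + \<bar>1 / norm a ^ 3 - 1 / norm b ^ 3\<bar> * norm b"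
    by (metis norm_triangle_ineq norm_scaleR abs_of_nonneg zero_le_divide_1_iff zero_le_power norm_ge_zero)
  also have "\<dots> \<le> 1 / d ^ 3 * norm (a - b) + (3 * R\<^sup>2 / d ^ 6 * norm (a - b)) * R"
  proof (intro add_mono mult_right_mono mult_mono)
    show "1 / norm a ^ 3 \<le> 1 / d ^ 3"
      using assms by (intro divide_left_mono power_mono mult_pos_pos) auto
    have "\<bar>norm b - norm a\<bar> \<le> norm (a - b)"
      by (metis norm_triangle_ineq3 norm_minus_commute)
    then show "\<bar>1 / norm a ^ 3 - 1 / norm b ^ 3\<bar> \<le> 3 * R\<^sup>2 / d ^ 6 * norm (a - b)"
      using abs_inverse_cube_diff_le[of d "norm a" R "norm b"] assms
      by (smt (verit) divide_nonneg_pos mult_left_mono zero_le_power2 zero_less_power)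
  qed (use assms in auto)
  finally show ?thesis
    by (simp add: algebra_simps power2_eq_square power3_eq_cube)
qed

lemma has_derivative_inverse_distance:
  fixes x p :: "'a::real_inner"
  assumes "x \<noteq> p"
  shows "((\<lambda>y. c / norm (y - p)) has_derivative (\<lambda>h. (c *\<^sub>R newton_kernel (p - x)) \<bullet> h)) (at x)"
proof -
  have "((\<lambda>y. y - p) has_derivative (\<lambda>h. h)) (at x)"
    by (auto intro!: derivative_eq_intros)
  from has_derivative_inverse_norm[OF this] assms
  have "((\<lambda>y. c * (1 / norm (y - p))) has_derivative (\<lambda>h. c * (- ((x - p) \<bullet> h) / norm (x - p) ^ 3))) (at x)"
    by (intro has_derivative_mult_right) auto
  moreover have "(\<lambda>h. c * (- ((x - p) \<bullet> h) / norm (x - p) ^ 3)) = (\<lambda>h. (c *\<^sub>R newton_kernel (p - x)) \<bullet> h)"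
    by (auto simp: newton_kernel_def norm_minus_commute inner_diff_left field_simps diff_divide_distrib)
  ultimately show ?thesis
    by simp
qed

lemma sum_pairs_through_index:
  fixes P :: "nat \<Rightarrow> 'a::comm_monoid_add"
  assumes "i < n" "P i = 0"
  shows "(\<Sum>k<n. \<Sum>l\<in>{k<..<n}. if k = i then P l else if l = i then P k else 0) = (\<Sum>j<n. P j)"
proof -
  have "(\<Sum>k<n. \<Sum>l\<in>{k<..<n}. if k = i then P l else if l = i then P k else 0)
      = (\<Sum>k<n. if k = i then (\<Sum>l\<in>{i<..<n}. P l) else if k < i then P k else 0)"
    using assms(1) by (intro sum.cong refl) (auto simp: sum.delta')
  also have "\<dots> = (\<Sum>k<n. (if k = i then (\<Sum>l\<in>{i<..<n}. P l) else 0) + (if k < i then P k else 0))"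
    by (intro sum.cong refl) auto
  also have "\<dots> = (\<Sum>l\<in>{i<..<n}. P l) + (\<Sum>k<i. P k)"
  proof -
    have "{..<n} \<inter> {k. k < i} = {..<i}"
      using assms(1) by auto
    then show ?thesis
      using assms(1) by (simp add: sum.distrib sum.If_cases)
  qed
  also have "\<dots> = (\<Sum>j<n. P j)"
    using assms
    by (metis add.commute add_0 atLeast0LessThan atLeastSucLessThan_greaterThanLessThan
        less_imp_le_nat sum.atLeast_Suc_lessThan sum.atLeastLessThan_concat zero_le)
  finally show ?thesis .
qed

lemma has_derivative_potential:
  fixes x :: "nat \<Rightarrow> real^'d"
  assumes "i < n" and "\<And>j. j < n \<Longrightarrow> j \<noteq> i \<Longrightarrow> x j \<noteq> x i"
  shows "((\<lambda>y. potential n m (x(i := y))) has_derivative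
     (\<lambda>h. (\<Sum>j<n. (m i * m j) *\<^sub>R newton_kernel (x j - x i)) \<bullet> h)) (at (x i))"
proof -
  define P where "P j = (m i * m j) *\<^sub>R newton_kernel (x j - x i)" for j
  have pair: "((\<lambda>y. m k * m l / norm ((x(i := y)) k - (x(i := y)) l)) has_derivative
      (\<lambda>h. (if k = i then P l else if l = i then P k else 0) \<bullet> h)) (at (x i))"
    if "k < n" "l \<in> {k<..<n}" for k l
  proof -
    consider "k = i" | "l = i" | "k \<noteq> i" "l \<noteq> i"
      by blast
    then show ?thesis
    proof cases
      case 1
      then have "(\<lambda>y. m k * m l / norm ((x(i := y)) k - (x(i := y)) l)) = (\<lambda>y. m k * m l / norm (y - x l))"
        using that by auto
      then show ?thesis
        using has_derivative_inverse_distance[of "x i" "x l" "m k * m l"] 1 that assms(2)[of l]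
        by (auto simp: P_def)
    next
      case 2
      then have "(\<lambda>y. m k * m l / norm ((x(i := y)) k - (x(i := y)) l)) = (\<lambda>y. m k * m l / norm (y - x k))"
        using that by (auto simp: norm_minus_commute)
      then show ?thesis
        using has_derivative_inverse_distance[of "x i" "x k" "m k * m l"] 2 that assms(2)[of k]
        by (auto simp: P_def mult.commute)
    qed auto
  qed
  have "((\<lambda>y. potential n m (x(i := y))) has_derivative
      (\<lambda>h. \<Sum>k<n. \<Sum>l\<in>{k<..<n}. (if k = i then P l else if l = i then P k else 0) \<bullet> h)) (at (x i))"
    unfolding potential_def by (intro has_derivative_sum pair) auto
  moreover have "(\<Sum>k<n. \<Sum>l\<in>{k<..<n}. if k = i then P l else if l = i then P k else 0) = (\<Sum>j<n. P j)"
    using assms(1) by (intro sum_pairs_through_index) (simp_all add: P_def)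
  ultimately show ?thesis
    by (simp add: P_def inner_sum_left[symmetric])
qed

section \<open>The cluster and its moment of inertia\<close>

locale nbody_cluster =
  fixes n :: nat and m :: "nat \<Rightarrow> real" and q :: "real \<Rightarrow> nat \<Rightarrow> real^'d"
    and v a :: "real \<Rightarrow> nat \<Rightarrow> real^'d" and L :: "nat \<Rightarrow> real^'d"
    and t0 T :: real and G :: "nat set" and LG :: "real^'d"
  assumes mpos: "\<And>i. i < n \<Longrightarrow> m i > 0"
    and t0T: "t0 < T"
    and vel: "\<And>i t. i < n \<Longrightarrow> t \<in> {t0..<T} \<Longrightarrow>
                 ((\<lambda>s. q s i) has_vector_derivative v t i) (at t within {t0..<T})"
    and acc: "\<And>i t. i < n \<Longrightarrow> t \<in> {t0..<T} \<Longrightarrow>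
                 ((\<lambda>s. v s i) has_vector_derivative a t i) (at t within {t0..<T})"
    and newton: "\<And>i t. i < n \<Longrightarrow> t \<in> {t0..<T} \<Longrightarrow>
                 partial_grad_U n m (q t) i (m i *\<^sub>R a t i)"
    and nocoll: "\<And>i j t. i < n \<Longrightarrow> j < n \<Longrightarrow> i \<noteq> j \<Longrightarrow> t \<in> {t0..<T} \<Longrightarrow> q t i \<noteq> q t j"
    and lim: "\<And>i. i < n \<Longrightarrow> ((\<lambda>t. q t i) \<longlongrightarrow> L i) (at_left T)"
    and Gsub: "G \<subseteq> {..<n}" and Gcard: "card G \<ge> 2"
    and Gin: "\<And>i. i \<in> G \<Longrightarrow> L i = LG"
    and Gout: "\<And>j. j < n \<Longrightarrow> j \<notin> G \<Longrightarrow> L j \<noteq> LG"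
begin

definition "others = {..<n} - G"
definition "mass = (\<Sum>i\<in>G. m i)"
definition "center t = cluster_center m G (q t)"
definition "center_vel t = inverse mass *\<^sub>R (\<Sum>i\<in>G. m i *\<^sub>R v t i)"
definition "center_acc t = inverse mass *\<^sub>R (\<Sum>i\<in>G. m i *\<^sub>R a t i)"
definition "rel_pos t i = q t i - center t"
definition "rel_vel t i = v t i - center_vel t"
definition "force t i j = (m i * m j) *\<^sub>R newton_kernel (q t j - q t i)"
definition "internal_force t i = (\<Sum>j\<in>G. force t i j)"
definition "external_field t i = (\<Sum>j\<in>others. m j *\<^sub>R newton_kernel (q t j - q t i))"

definition "inertia t = (\<Sum>i\<in>G. m i * (rel_pos t i \<bullet> rel_pos t i))"
definition "inertia' t = 2 * (\<Sum>i\<in>G. m i * (rel_pos t i \<bullet> rel_vel t i))"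
definition "kinetic t = (\<Sum>i\<in>G. m i * (rel_vel t i \<bullet> rel_vel t i)) / 2"
text \<open>The diagonal terms vanish, since \<open>x / 0 = 0\<close>.\<close>
definition "self_potential t = (\<Sum>i\<in>G. \<Sum>j\<in>G. m i * m j / norm (q t i - q t j)) / 2"
definition "energy t = kinetic t - self_potential t"
definition "energy' t = (\<Sum>i\<in>G. m i * (rel_vel t i \<bullet> external_field t i))"
definition "external_virial t = 2 * (\<Sum>i\<in>G. m i * (rel_pos t i \<bullet> external_field t i))"
definition "inertia'' t = 4 * kinetic t - 2 * self_potential t + external_virial t"

lemma finite_G: "finite G"
  using Gsub finite_subset by blast

lemma m_pos: "i \<in> G \<Longrightarrow> 0 < m i"
  using Gsub mpos by auto

lemma mass_pos: "0 < mass"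
  unfolding mass_def using Gcard finite_G m_pos by (intro sum_pos) auto

lemma obtain_two_in_G:
  obtains i j where "i \<in> G" "j \<in> G" "i \<noteq> j"
proof -
  have "\<not> card G \<le> Suc 0"
    using Gcard by simp
  then show ?thesis
    using that card_le_Suc0_iff_eq[OF finite_G] by blast
qed

lemma center_eq: "center t = inverse mass *\<^sub>R (\<Sum>i\<in>G. m i *\<^sub>R q t i)"
  by (simp add: center_def cluster_center_def mass_def)

lemma newton_sum:
  assumes "i < n" "t \<in> {t0..<T}"
  shows "m i *\<^sub>R a t i = (\<Sum>j<n. force t i j)"
proof -
  have "((\<lambda>y. potential n m ((q t)(i := y))) has_derivative (\<lambda>h. (m i *\<^sub>R a t i) \<bullet> h)) (at (q t i))"
    using newton[OF assms] unfolding partial_grad_U_def .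
  moreover have "((\<lambda>y. potential n m ((q t)(i := y))) has_derivative
      (\<lambda>h. (\<Sum>j<n. force t i j) \<bullet> h)) (at (q t i))"
    unfolding force_def using nocoll assms by (intro has_derivative_potential) auto
  ultimately have "(\<lambda>h. (m i *\<^sub>R a t i) \<bullet> h) = (\<lambda>h. (\<Sum>j<n. force t i j) \<bullet> h)"
    by (rule has_derivative_unique)
  then have "(m i *\<^sub>R a t i - (\<Sum>j<n. force t i j)) \<bullet> (m i *\<^sub>R a t i - (\<Sum>j<n. force t i j)) = 0"
    by (metis inner_diff_left right_minus_eq)
  then show ?thesis
    by simp
qed

lemma newton_cluster:
  assumes "i \<in> G" "t \<in> {t0..<T}"
  shows "m i *\<^sub>R a t i = internal_force t i + m i *\<^sub>R external_field t i"
proof -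
  have "(\<Sum>j<n. force t i j) = (\<Sum>j\<in>G. force t i j) + (\<Sum>j\<in>others. force t i j)"
    using Gsub by (simp add: others_def sum.subset_diff)
  then show ?thesis
    using newton_sum assms Gsub
    by (auto simp: internal_force_def external_field_def force_def scaleR_sum_right)
qed

lemma force_antisym: "force t j i = - force t i j"
  using newton_kernel_minus[of "q t j - q t i"] by (simp add: force_def mult.commute)

lemma sum_internal_force: "(\<Sum>i\<in>G. internal_force t i) = 0"
proof -
  have "(\<Sum>i\<in>G. internal_force t i) = (\<Sum>i\<in>G. \<Sum>j\<in>G. force t j i)"
    unfolding internal_force_def by (rule sum.swap)
  also have "\<dots> = (\<Sum>i\<in>G. \<Sum>j\<in>G. - force t i j)"
    by (intro sum.cong refl) (rule force_antisym)
  finally have "(\<Sum>i\<in>G. internal_force t i) = - (\<Sum>i\<in>G. internal_force t i)"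
    by (simp add: internal_force_def sum_negf)
  then have "(2::real) *\<^sub>R (\<Sum>i\<in>G. internal_force t i) = 0"
    by (metis add.right_inverse scaleR_2)
  then show ?thesis
    by simp
qed

lemma sum_weighted_inner_eq_0:
  assumes "(\<Sum>i\<in>G. m i *\<^sub>R y i) = 0"
  shows "(\<Sum>i\<in>G. m i * (y i \<bullet> z)) = 0"
proof -
  have "(\<Sum>i\<in>G. m i * (y i \<bullet> z)) = (\<Sum>i\<in>G. m i *\<^sub>R y i) \<bullet> z"
    by (simp add: inner_sum_left)
  then show ?thesis
    using assms by simp
qed

lemma sum_weighted_rel_pos: "(\<Sum>i\<in>G. m i *\<^sub>R rel_pos t i) = 0"
proof -
  have "(\<Sum>i\<in>G. m i *\<^sub>R rel_pos t i) = (\<Sum>i\<in>G. m i *\<^sub>R q t i) - mass *\<^sub>R center t"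
    by (simp add: rel_pos_def scaleR_diff_right sum_subtractf mass_def scaleR_sum_left)
  then show ?thesis
    using mass_pos by (simp add: center_eq)
qed

lemma sum_weighted_rel_vel: "(\<Sum>i\<in>G. m i *\<^sub>R rel_vel t i) = 0"
proof -
  have "(\<Sum>i\<in>G. m i *\<^sub>R rel_vel t i) = (\<Sum>i\<in>G. m i *\<^sub>R v t i) - mass *\<^sub>R center_vel t"
    by (simp add: rel_vel_def scaleR_diff_right sum_subtractf mass_def scaleR_sum_left)
  then show ?thesis
    using mass_pos by (simp add: center_vel_def)
qed

text \<open>Virial identity of the internal forces: symmetrising the double sum turns
  \<open>q\<^sub>i \<bullet> F\<^sub>i\<^sub>j\<close> into \<open>(q\<^sub>i - q\<^sub>j) \<bullet> F\<^sub>i\<^sub>j / 2 = - m\<^sub>i m\<^sub>j / (2 |q\<^sub>i - q\<^sub>j|)\<close>.\<close>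
lemma sum_rel_pos_internal_force: "(\<Sum>i\<in>G. rel_pos t i \<bullet> internal_force t i) = - self_potential t"
proof -
  have "(\<Sum>i\<in>G. rel_pos t i \<bullet> internal_force t i)
      = (\<Sum>i\<in>G. q t i \<bullet> internal_force t i) - center t \<bullet> (\<Sum>i\<in>G. internal_force t i)"
    by (simp add: rel_pos_def inner_diff_left sum_subtractf inner_sum_right)
  also have "\<dots> = (\<Sum>i\<in>G. q t i \<bullet> internal_force t i)"
    using sum_internal_force by simp
  also have "\<dots> = (\<Sum>i\<in>G. \<Sum>j\<in>G. q t i \<bullet> force t i j)"
    by (simp add: internal_force_def inner_sum_right)
  finally have double_sum: "(\<Sum>i\<in>G. rel_pos t i \<bullet> internal_force t i) = (\<Sum>i\<in>G. \<Sum>j\<in>G. q t i \<bullet> force t i j)" .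
  have "(\<Sum>i\<in>G. \<Sum>j\<in>G. q t i \<bullet> force t i j) = (\<Sum>i\<in>G. \<Sum>j\<in>G. q t j \<bullet> force t j i)"
    by (rule sum.swap)
  also have "\<dots> = (\<Sum>i\<in>G. \<Sum>j\<in>G. - (q t j \<bullet> force t i j))"
    by (intro sum.cong refl) (subst force_antisym, simp)
  finally have antisymmetric: "(\<Sum>i\<in>G. \<Sum>j\<in>G. q t i \<bullet> force t i j) = - (\<Sum>i\<in>G. \<Sum>j\<in>G. q t j \<bullet> force t i j)"
    by (simp add: sum_negf)
  have pair: "(q t i - q t j) \<bullet> force t i j = - (m i * m j / norm (q t i - q t j))" for i j
  proof -
    have "(q t i - q t j) \<bullet> force t i j
        = - (m i * m j) * ((q t j - q t i) \<bullet> newton_kernel (q t j - q t i))"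
      by (simp add: force_def inner_diff_left inner_diff_right algebra_simps)
    then show ?thesis
      by (simp add: inner_newton_kernel norm_minus_commute)
  qed
  have "(\<Sum>i\<in>G. \<Sum>j\<in>G. q t i \<bullet> force t i j) - (\<Sum>i\<in>G. \<Sum>j\<in>G. q t j \<bullet> force t i j)
      = (\<Sum>i\<in>G. \<Sum>j\<in>G. (q t i - q t j) \<bullet> force t i j)"
    by (simp add: sum_subtractf inner_diff_left)
  also have "\<dots> = - (2 * self_potential t)"
    by (simp add: pair self_potential_def sum_negf)
  finally show ?thesis
    using double_sum antisymmetric by linarith
qed

lemma has_vector_derivative_center:
  assumes "t \<in> {t0..<T}"
  shows "(center has_vector_derivative center_vel t) (at t within {t0..<T})"
proof -
  have "center = (\<lambda>s. inverse mass *\<^sub>R (\<Sum>i\<in>G. m i *\<^sub>R q s i))"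
    by (simp add: center_eq fun_eq_iff)
  then show ?thesis
    unfolding center_vel_def using vel Gsub assms
    by (auto intro!: bounded_linear.has_vector_derivative[OF bounded_linear_scaleR_right] has_vector_derivative_sum)
qed

lemma has_vector_derivative_center_vel:
  assumes "t \<in> {t0..<T}"
  shows "(center_vel has_vector_derivative center_acc t) (at t within {t0..<T})"
proof -
  have "center_vel = (\<lambda>s. inverse mass *\<^sub>R (\<Sum>i\<in>G. m i *\<^sub>R v s i))"
    by (simp add: center_vel_def fun_eq_iff)
  then show ?thesis
    unfolding center_acc_def using acc Gsub assms
    by (auto intro!: bounded_linear.has_vector_derivative[OF bounded_linear_scaleR_right] has_vector_derivative_sum)
qed

lemma has_vector_derivative_rel_pos:
  "i \<in> G \<Longrightarrow> t \<in> {t0..<T} \<Longrightarrow> ((\<lambda>s. rel_pos s i) has_vector_derivative rel_vel t i) (at t within {t0..<T})"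
  unfolding rel_pos_def rel_vel_def using vel Gsub
  by (auto intro!: has_vector_derivative_diff has_vector_derivative_center)

lemma has_vector_derivative_rel_vel:
  "i \<in> G \<Longrightarrow> t \<in> {t0..<T} \<Longrightarrow>
    ((\<lambda>s. rel_vel s i) has_vector_derivative a t i - center_acc t) (at t within {t0..<T})"
  unfolding rel_vel_def using acc Gsub
  by (auto intro!: has_vector_derivative_diff has_vector_derivative_center_vel)

lemma sum_rel_pos_inner_acc:
  assumes "t \<in> {t0..<T}"
  shows "(\<Sum>i\<in>G. m i * (rel_pos t i \<bullet> (a t i - center_acc t)))
    = - self_potential t + external_virial t / 2"
proof -
  have "(\<Sum>i\<in>G. m i * (rel_pos t i \<bullet> (a t i - center_acc t)))
      = (\<Sum>i\<in>G. rel_pos t i \<bullet> (m i *\<^sub>R a t i)) - (\<Sum>i\<in>G. m i * (rel_pos t i \<bullet> center_acc t))"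
    by (simp add: inner_diff_right right_diff_distrib sum_subtractf)
  also have "(\<Sum>i\<in>G. m i * (rel_pos t i \<bullet> center_acc t)) = 0"
    by (rule sum_weighted_inner_eq_0[OF sum_weighted_rel_pos])
  also have "(\<Sum>i\<in>G. rel_pos t i \<bullet> (m i *\<^sub>R a t i))
      = (\<Sum>i\<in>G. rel_pos t i \<bullet> internal_force t i) + (\<Sum>i\<in>G. m i * (rel_pos t i \<bullet> external_field t i))"
    using newton_cluster[OF _ assms] by (simp add: inner_add_right sum.distrib)
  finally show ?thesis
    by (simp add: sum_rel_pos_internal_force external_virial_def)
qed

lemma sum_rel_vel_inner_acc:
  assumes "t \<in> {t0..<T}"
  shows "(\<Sum>i\<in>G. m i * (rel_vel t i \<bullet> (a t i - center_acc t)))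
    = (\<Sum>i\<in>G. rel_vel t i \<bullet> internal_force t i) + energy' t"
proof -
  have "(\<Sum>i\<in>G. m i * (rel_vel t i \<bullet> (a t i - center_acc t)))
      = (\<Sum>i\<in>G. rel_vel t i \<bullet> (m i *\<^sub>R a t i)) - (\<Sum>i\<in>G. m i * (rel_vel t i \<bullet> center_acc t))"
    by (simp add: inner_diff_right right_diff_distrib sum_subtractf)
  also have "(\<Sum>i\<in>G. m i * (rel_vel t i \<bullet> center_acc t)) = 0"
    by (rule sum_weighted_inner_eq_0[OF sum_weighted_rel_vel])
  also have "(\<Sum>i\<in>G. rel_vel t i \<bullet> (m i *\<^sub>R a t i))
      = (\<Sum>i\<in>G. rel_vel t i \<bullet> internal_force t i) + energy' t"
    using newton_cluster[OF _ assms] by (simp add: inner_add_right sum.distrib energy'_def)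
  finally show ?thesis
    by simp
qed

lemma has_vector_derivative_inertia:
  assumes "t \<in> {t0..<T}"
  shows "(inertia has_vector_derivative inertia' t) (at t within {t0..<T})"
proof -
  have "((\<lambda>s. \<Sum>i\<in>G. m i * (rel_pos s i \<bullet> rel_pos s i)) has_vector_derivative
      (\<Sum>i\<in>G. m i * (rel_pos t i \<bullet> rel_vel t i + rel_vel t i \<bullet> rel_pos t i))) (at t within {t0..<T})"
    using assms
    by (intro has_vector_derivative_sum has_vector_derivative_mult_right has_vector_derivative_inner
        has_vector_derivative_rel_pos)
  then show ?thesis
    unfolding inertia_def[abs_def] inertia'_def
    by (rule has_vector_derivative_eq_rhs) (simp add: inner_commute sum_distrib_left algebra_simps)
qed

lemma has_vector_derivative_inertia':
  assumes "t \<in> {t0..<T}"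
  shows "(inertia' has_vector_derivative inertia'' t) (at t within {t0..<T})"
proof -
  have "((\<lambda>s. 2 * (\<Sum>i\<in>G. m i * (rel_pos s i \<bullet> rel_vel s i))) has_vector_derivative
      2 * (\<Sum>i\<in>G. m i * (rel_pos t i \<bullet> (a t i - center_acc t) + rel_vel t i \<bullet> rel_vel t i)))
      (at t within {t0..<T})"
    using assms
    by (intro has_vector_derivative_mult_right has_vector_derivative_sum has_vector_derivative_inner
        has_vector_derivative_rel_pos has_vector_derivative_rel_vel)
  moreover have "2 * (\<Sum>i\<in>G. m i * (rel_pos t i \<bullet> (a t i - center_acc t) + rel_vel t i \<bullet> rel_vel t i))
      = inertia'' t"
    using sum_rel_pos_inner_acc[OF assms]
    by (simp add: distrib_left sum.distrib inertia''_def kinetic_def)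
  ultimately show ?thesis
    unfolding inertia'_def[abs_def] by simp
qed

lemma has_vector_derivative_kinetic:
  assumes "t \<in> {t0..<T}"
  shows "(kinetic has_vector_derivative (\<Sum>i\<in>G. rel_vel t i \<bullet> internal_force t i) + energy' t)
    (at t within {t0..<T})"
proof -
  have "((\<lambda>s. (\<Sum>i\<in>G. m i * (rel_vel s i \<bullet> rel_vel s i)) / 2) has_vector_derivative
      (\<Sum>i\<in>G. m i * (rel_vel t i \<bullet> (a t i - center_acc t) + (a t i - center_acc t) \<bullet> rel_vel t i)) / 2)
      (at t within {t0..<T})"
    using assms
    by (intro has_vector_derivative_divide has_vector_derivative_sum has_vector_derivative_mult_right
        has_vector_derivative_inner has_vector_derivative_rel_vel)
  moreover have "(\<Sum>i\<in>G. m i * (rel_vel t i \<bullet> (a t i - center_acc t) + (a t i - center_acc t) \<bullet> rel_vel t i)) / 2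
      = (\<Sum>i\<in>G. m i * (rel_vel t i \<bullet> (a t i - center_acc t)))"
    by (simp add: inner_commute sum_distrib_left[symmetric] mult.left_commute[of _ 2])
  ultimately show ?thesis
    unfolding kinetic_def[abs_def] by (simp add: sum_rel_vel_inner_acc[OF assms])
qed

lemma has_vector_derivative_self_potential:
  assumes t: "t \<in> {t0..<T}"
  shows "(self_potential has_vector_derivative (\<Sum>i\<in>G. rel_vel t i \<bullet> internal_force t i))
    (at t within {t0..<T})"
proof -
  define D where "D i j = m i * m j * (- ((q t i - q t j) \<bullet> (v t i - v t j)) / norm (q t i - q t j) ^ 3)"
    for i j
  have pair: "((\<lambda>s. m i * m j / norm (q s i - q s j)) has_vector_derivative D i j) (at t within {t0..<T})"
    if "i \<in> G" "j \<in> G" for i j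
  proof (cases "i = j")
    case False
    then have "q t i - q t j \<noteq> 0"
      using nocoll that Gsub t by auto
    then have "((\<lambda>s. m i * m j * (1 / norm (q s i - q s j))) has_vector_derivative D i j) (at t within {t0..<T})"
      unfolding D_def using vel that Gsub t
      by (intro has_vector_derivative_mult_right has_vector_derivative_inverse_norm
          has_vector_derivative_diff) auto
    then show ?thesis
      by simp
  qed (simp add: D_def)
  have "D i j = v t i \<bullet> force t i j + v t j \<bullet> force t j i" for i j
  proof -
    define k where "k = 1 / norm (q t i - q t j) ^ 3"
    have "v t i \<bullet> force t i j = m i * m j * k * (v t i \<bullet> (q t j - q t i))"
      by (simp add: force_def newton_kernel_def k_def norm_minus_commute)
    moreover have "v t j \<bullet> force t j i = m i * m j * k * (v t j \<bullet> (q t i - q t j))"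
      by (simp add: force_def newton_kernel_def k_def)
    moreover have "D i j = - (m i * m j * k * ((q t i - q t j) \<bullet> (v t i - v t j)))"
      by (simp add: D_def k_def)
    ultimately show ?thesis
      by (simp add: inner_diff_left inner_diff_right inner_commute algebra_simps)
  qed
  then have "(\<Sum>i\<in>G. \<Sum>j\<in>G. D i j) = 2 * (\<Sum>i\<in>G. v t i \<bullet> internal_force t i)"
    by (simp add: sum.distrib sum.swap[of "\<lambda>i j. v t j \<bullet> force t j i"] internal_force_def
        inner_sum_right)
  also have "(\<Sum>i\<in>G. v t i \<bullet> internal_force t i) = (\<Sum>i\<in>G. rel_vel t i \<bullet> internal_force t i)"
    by (simp add: rel_vel_def inner_diff_left sum_subtractf inner_sum_right[symmetric] sum_internal_force)
  finally show ?thesis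
    unfolding self_potential_def[abs_def]
    by (intro has_vector_derivative_eq_rhs[OF has_vector_derivative_divide[OF has_vector_derivative_sum[OF
          has_vector_derivative_sum[OF pair]]]]) auto
qed

lemma has_vector_derivative_energy:
  assumes "t \<in> {t0..<T}"
  shows "(energy has_vector_derivative energy' t) (at t within {t0..<T})"
  using has_vector_derivative_diff[OF has_vector_derivative_kinetic[OF assms]
      has_vector_derivative_self_potential[OF assms]]
  unfolding energy_def[abs_def] by simp

section \<open>Estimates near the collision\<close>

definition "others_mass = (\<Sum>j\<in>others. m j)"

definition "field_regular B \<Lambda> t \<longleftrightarrow>
  (\<forall>i\<in>G. norm (external_field t i) \<le> B) \<and>
  (\<forall>i\<in>G. \<forall>k\<in>G. norm (external_field t i - external_field t k) \<le> \<Lambda> * norm (q t i - q t k))"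

lemma finite_others: "finite others"
  by (simp add: others_def)

lemma others_mass_nonneg: "0 \<le> others_mass"
  unfolding others_mass_def others_def using mpos by (intro sum_nonneg) (auto intro: less_imp_le)

lemma q_tendsto: "i \<in> G \<Longrightarrow> ((\<lambda>t. q t i) \<longlongrightarrow> LG) (at_left T)"
  using lim[of i] Gin[of i] Gsub by auto

lemma center_tendsto: "(center \<longlongrightarrow> LG) (at_left T)"
proof -
  have "((\<lambda>t. inverse mass *\<^sub>R (\<Sum>i\<in>G. m i *\<^sub>R q t i)) \<longlongrightarrow> inverse mass *\<^sub>R (\<Sum>i\<in>G. m i *\<^sub>R LG))
      (at_left T)"
    by (intro tendsto_intros q_tendsto)
  moreover have "inverse mass *\<^sub>R (\<Sum>i\<in>G. m i *\<^sub>R LG) = LG"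
    using mass_pos by (simp add: scaleR_sum_left[symmetric] mass_def)
  ultimately show ?thesis
    by (simp add: center_eq[abs_def])
qed

lemma rel_pos_tendsto: "i \<in> G \<Longrightarrow> ((\<lambda>t. rel_pos t i) \<longlongrightarrow> 0) (at_left T)"
  using tendsto_diff[OF q_tendsto center_tendsto] by (simp add: rel_pos_def[abs_def])

lemma inertia_tendsto: "(inertia \<longlongrightarrow> 0) (at_left T)"
proof -
  have "((\<lambda>t. \<Sum>i\<in>G. m i * (rel_pos t i \<bullet> rel_pos t i)) \<longlongrightarrow> (\<Sum>i\<in>G. m i * ((0::real^'d) \<bullet> 0)))
      (at_left T)"
    by (intro tendsto_sum tendsto_mult tendsto_const tendsto_inner rel_pos_tendsto)
  then show ?thesis
    by (simp add: inertia_def[abs_def])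
qed

lemma eventually_separated:
  obtains \<delta> R where "0 < \<delta>" "\<delta> \<le> R"
    and "eventually (\<lambda>t. \<forall>i\<in>G. \<forall>j\<in>others. \<delta> \<le> norm (q t j - q t i) \<and> norm (q t j - q t i) \<le> R)
      (at_left T)"
proof
  define \<delta> where "\<delta> = Min (insert 1 ((\<lambda>j. norm (L j - LG) / 2) ` others))"
  define R where "R = Max (insert 1 ((\<lambda>j. norm (L j - LG) + 1) ` others))"
  have L_ne: "L j \<noteq> LG" if "j \<in> others" for j
    using that Gout by (auto simp: others_def)
  have \<delta>_pos: "0 < \<delta>"
    unfolding \<delta>_def using finite_others L_ne by (subst Min_gr_iff) auto
  then show "0 < \<delta>" .
  have "\<delta> \<le> 1" "1 \<le> R"
    unfolding \<delta>_def R_def using finite_others by (auto intro: Min_le Max_ge)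
  then show "\<delta> \<le> R"
    by linarith
  have "eventually (\<lambda>t. \<delta> \<le> norm (q t j - q t i) \<and> norm (q t j - q t i) \<le> R) (at_left T)"
    if i: "i \<in> G" and j: "j \<in> others" for i j
  proof -
    have dist_tendsto: "((\<lambda>t. norm (q t j - q t i)) \<longlongrightarrow> norm (L j - LG)) (at_left T)"
      using j by (intro tendsto_intros lim q_tendsto i) (auto simp: others_def)
    have "\<delta> \<le> norm (L j - LG) / 2"
      unfolding \<delta>_def using j finite_others by (intro Min_le) auto
    moreover have "norm (L j - LG) + 1 \<le> R"
      unfolding R_def using j finite_others by (intro Max_ge) auto
    ultimately have "\<delta> < norm (L j - LG)" "norm (L j - LG) < R"
      using L_ne[OF j] \<delta>_pos by auto
    then have "eventually (\<lambda>t. \<delta> < norm (q t j - q t i)) (at_left T)"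
      "eventually (\<lambda>t. norm (q t j - q t i) < R) (at_left T)"
      using order_tendstoD[OF dist_tendsto] by auto
    then show ?thesis
      by eventually_elim auto
  qed
  then show "eventually (\<lambda>t. \<forall>i\<in>G. \<forall>j\<in>others. \<delta> \<le> norm (q t j - q t i) \<and> norm (q t j - q t i) \<le> R)
      (at_left T)"
    by (intro eventually_ball_finite finite_G finite_others ballI)
qed

lemma norm_external_field_le:
  assumes "0 < \<delta>" "i \<in> G" "\<forall>j\<in>others. \<delta> \<le> norm (q t j - q t i)"
  shows "norm (external_field t i) \<le> others_mass / \<delta>\<^sup>2"
proof -
  have "norm (external_field t i) \<le> (\<Sum>j\<in>others. norm (m j *\<^sub>R newton_kernel (q t j - q t i)))"
    unfolding external_field_def by (rule norm_sum)
  also have "\<dots> \<le> (\<Sum>j\<in>others. m j * (1 / \<delta>\<^sup>2))"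
  proof (intro sum_mono)
    fix j assume j: "j \<in> others"
    have "0 < norm (q t j - q t i)"
      using assms j by (meson less_le_trans)
    then have "1 / norm (q t j - q t i) ^ 2 \<le> 1 / \<delta>\<^sup>2"
      using assms j by (intro divide_left_mono power_mono) auto
    moreover have "0 < m j"
      using j mpos by (auto simp: others_def)
    ultimately have "m j * (1 / norm (q t j - q t i) ^ 2) \<le> m j * (1 / \<delta>\<^sup>2)"
      by (intro mult_left_mono) auto
    then show "norm (m j *\<^sub>R newton_kernel (q t j - q t i)) \<le> m j * (1 / \<delta>\<^sup>2)"
      using \<open>0 < m j\<close> by (simp add: norm_newton_kernel)
  qed
  also have "\<dots> = others_mass / \<delta>\<^sup>2"
    by (simp add: others_mass_def sum_divide_distrib)
  finally show ?thesis .
qed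

lemma external_field_lipschitz:
  assumes "0 < \<delta>" "i \<in> G" "k \<in> G"
    and "\<forall>i\<in>G. \<forall>j\<in>others. \<delta> \<le> norm (q t j - q t i) \<and> norm (q t j - q t i) \<le> R"
  shows "norm (external_field t i - external_field t k)
    \<le> others_mass * (1 / \<delta> ^ 3 + 3 * R ^ 3 / \<delta> ^ 6) * norm (q t i - q t k)"
proof -
  define C where "C = 1 / \<delta> ^ 3 + 3 * R ^ 3 / \<delta> ^ 6"
  have "external_field t i - external_field t k
      = (\<Sum>j\<in>others. m j *\<^sub>R (newton_kernel (q t j - q t i) - newton_kernel (q t j - q t k)))"
    by (simp add: external_field_def sum_subtractf scaleR_diff_right)
  then have "norm (external_field t i - external_field t k)
      \<le> (\<Sum>j\<in>others. norm (m j *\<^sub>R (newton_kernel (q t j - q t i) - newton_kernel (q t j - q t k))))"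
    by (simp only: norm_sum)
  also have "\<dots> \<le> (\<Sum>j\<in>others. m j * (C * norm (q t i - q t k)))"
  proof (intro sum_mono)
    fix j assume j: "j \<in> others"
    have "norm (newton_kernel (q t j - q t i) - newton_kernel (q t j - q t k))
        \<le> C * norm ((q t j - q t i) - (q t j - q t k))"
      unfolding C_def using assms j by (intro newton_kernel_lipschitz) auto
    moreover have "norm ((q t j - q t i) - (q t j - q t k)) = norm (q t i - q t k)"
      by (simp add: norm_minus_commute)
    moreover have "0 < m j"
      using j mpos by (auto simp: others_def)
    ultimately show "norm (m j *\<^sub>R (newton_kernel (q t j - q t i) - newton_kernel (q t j - q t k)))
        \<le> m j * (C * norm (q t i - q t k))"
      by (simp add: mult_left_mono)
  qed
  also have "\<dots> = others_mass * C * norm (q t i - q t k)"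
    by (simp add: others_mass_def sum_distrib_right mult.assoc)
  finally show ?thesis
    by (simp add: C_def)
qed

lemma eventually_field_regular:
  obtains B \<Lambda> where "0 \<le> B" "0 < \<Lambda>" "eventually (field_regular B \<Lambda>) (at_left T)"
proof -
  obtain \<delta> R where \<delta>: "0 < \<delta>" and "\<delta> \<le> R"
    and sep: "eventually (\<lambda>t. \<forall>i\<in>G. \<forall>j\<in>others. \<delta> \<le> norm (q t j - q t i) \<and> norm (q t j - q t i) \<le> R)
      (at_left T)"
    by (rule eventually_separated)
  define \<Lambda> where "\<Lambda> = others_mass * (1 / \<delta> ^ 3 + 3 * R ^ 3 / \<delta> ^ 6) + 1"
  have "0 \<le> others_mass * (1 / \<delta> ^ 3 + 3 * R ^ 3 / \<delta> ^ 6)"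
    using others_mass_nonneg \<delta> \<open>\<delta> \<le> R\<close> by (intro mult_nonneg_nonneg) auto
  then have "0 < \<Lambda>"
    by (simp add: \<Lambda>_def)
  moreover have "eventually (field_regular (others_mass / \<delta>\<^sup>2) \<Lambda>) (at_left T)"
    using sep
  proof (rule eventually_mono)
    fix t assume t: "\<forall>i\<in>G. \<forall>j\<in>others. \<delta> \<le> norm (q t j - q t i) \<and> norm (q t j - q t i) \<le> R"
    have "norm (external_field t i - external_field t k) \<le> \<Lambda> * norm (q t i - q t k)"
      if "i \<in> G" "k \<in> G" for i k
      using external_field_lipschitz[OF \<delta> that t]
      by (smt (verit, best) \<Lambda>_def mult_right_mono norm_ge_zero)
    then show "field_regular (others_mass / \<delta>\<^sup>2) \<Lambda> t"
      unfolding field_regular_def using norm_external_field_le[OF \<delta>] t by auto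
  qed
  ultimately show ?thesis
    using that \<delta> others_mass_nonneg by (meson divide_nonneg_pos zero_less_power)
qed

lemma inertia_nonneg: "0 \<le> inertia t"
  unfolding inertia_def using m_pos by (intro sum_nonneg) (simp add: less_imp_le)

lemma kinetic_nonneg: "0 \<le> kinetic t"
  unfolding kinetic_def using m_pos by (intro divide_nonneg_pos sum_nonneg) (auto simp: less_imp_le)

lemma weighted_rel_pos_le_inertia: "i \<in> G \<Longrightarrow> m i * (rel_pos t i \<bullet> rel_pos t i) \<le> inertia t"
  unfolding inertia_def using finite_G m_pos by (intro member_le_sum) (auto simp: less_imp_le)

lemma inertia_pos:
  assumes "t \<in> {t0..<T}"
  shows "0 < inertia t"
proof (rule ccontr)
  assume "\<not> 0 < inertia t"
  then have "inertia t = 0"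
    using inertia_nonneg[of t] by auto
  then have "rel_pos t i = 0" if "i \<in> G" for i
    using weighted_rel_pos_le_inertia[OF that, of t] m_pos[OF that]
    by (simp add: mult_le_0_iff) (meson inner_ge_zero inner_eq_zero_iff order_antisym)
  moreover obtain i j where "i \<in> G" "j \<in> G" "i \<noteq> j"
    by (rule obtain_two_in_G)
  ultimately show False
    using nocoll[of i j t] Gsub assms by (auto simp: rel_pos_def)
qed

lemma abs_inertia'_le:
  assumes "0 < l"
  shows "\<bar>inertia' t\<bar> \<le> l * inertia t + 2 * kinetic t / l"
proof -
  have "\<bar>inertia' t\<bar> \<le> (\<Sum>i\<in>G. \<bar>m i * (2 * (rel_pos t i \<bullet> rel_vel t i))\<bar>)"
    unfolding inertia'_def by (simp add: sum_distrib_left mult.left_commute[of 2] sum_abs)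
  also have "\<dots> \<le> (\<Sum>i\<in>G. m i * (l * (rel_pos t i \<bullet> rel_pos t i) + (rel_vel t i \<bullet> rel_vel t i) / l))"
    using m_pos assms
    by (intro sum_mono) (simp add: abs_mult mult_left_mono two_abs_inner_le less_imp_le)
  also have "\<dots> = l * inertia t + 2 * kinetic t / l"
    by (simp add: inertia_def kinetic_def algebra_simps sum.distrib sum_distrib_left sum_divide_distrib)
  finally show ?thesis .
qed

text \<open>Choosing \<open>l = 4 \<Lambda> I + 1\<close> in the previous estimate.\<close>
lemma inertia_mult_inertia'_le:
  assumes "0 < \<Lambda>" "0 < inertia t" "inertia t \<le> 1"
  shows "\<Lambda> * inertia t * inertia' t \<le> \<Lambda> * (4 * \<Lambda> + 1) + kinetic t / 2"
proof -
  define I l where "I = inertia t" and "l = 4 * \<Lambda> * I + 1"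
  have "0 < 4 * \<Lambda> * I"
    using assms by (simp add: I_def)
  then have "0 < l"
    unfolding l_def by linarith
  then have l: "0 < l" "4 * \<Lambda> * I / l \<le> 1"
    by (simp_all add: l_def divide_le_eq)
  have "\<Lambda> * I * inertia' t \<le> \<Lambda> * I * (l * I + 2 * kinetic t / l)"
    using abs_inertia'_le[OF \<open>0 < l\<close>, of t] assms by (intro mult_left_mono) (auto simp: I_def)
  also have "\<dots> = \<Lambda> * (l * I\<^sup>2) + (kinetic t / 2) * (4 * \<Lambda> * I / l)"
    by (simp add: power2_eq_square algebra_simps)
  also have "(kinetic t / 2) * (4 * \<Lambda> * I / l) \<le> kinetic t / 2"
    using kinetic_nonneg[of t] by (intro mult_left_le[OF l(2)]) simp
  also have "l * I\<^sup>2 \<le> (4 * \<Lambda> + 1) * 1"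
    using assms l by (intro mult_mono) (auto simp: I_def l_def power_le_one)
  finally show ?thesis
    using assms by (simp add: I_def mult_left_mono)
qed

lemma abs_external_virial_le:
  assumes "field_regular B \<Lambda> t" "\<forall>i\<in>G. norm (rel_pos t i) \<le> 1"
  shows "\<bar>external_virial t\<bar> \<le> 2 * mass * B"
proof -
  have "\<bar>\<Sum>i\<in>G. m i * (rel_pos t i \<bullet> external_field t i)\<bar> \<le> (\<Sum>i\<in>G. m i * B)"
  proof (rule order_trans[OF sum_abs sum_mono])
    fix i assume i: "i \<in> G"
    have "\<bar>rel_pos t i \<bullet> external_field t i\<bar> \<le> norm (rel_pos t i) * norm (external_field t i)"
      by (rule Cauchy_Schwarz_ineq2)
    also have "\<dots> \<le> 1 * B"
      using assms i by (intro mult_mono) (auto simp: field_regular_def)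
    finally show "\<bar>m i * (rel_pos t i \<bullet> external_field t i)\<bar> \<le> m i * B"
      using m_pos[OF i] by (simp add: abs_mult)
  qed
  then show ?thesis
    by (simp add: external_virial_def mass_def sum_distrib_right abs_mult)
qed

lemma norm_center_acc_le:
  assumes "t \<in> {t0..<T}" "field_regular B \<Lambda> t"
  shows "norm (center_acc t) \<le> B"
proof -
  have "center_acc t = inverse mass *\<^sub>R (\<Sum>i\<in>G. m i *\<^sub>R external_field t i)"
    using newton_cluster[OF _ assms(1)] by (simp add: center_acc_def sum.distrib sum_internal_force)
  moreover have "norm (\<Sum>i\<in>G. m i *\<^sub>R external_field t i) \<le> (\<Sum>i\<in>G. m i * B)"
    using assms(2) m_pos
    by (intro order_trans[OF norm_sum sum_mono])
      (auto simp: field_regular_def abs_of_pos intro!: mult_left_mono less_imp_le)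
  then have "norm (\<Sum>i\<in>G. m i *\<^sub>R external_field t i) \<le> mass * B"
    by (simp add: mass_def sum_distrib_right)
  ultimately show ?thesis
    using mass_pos by (simp add: field_simps)
qed

lemma rel_vel_inner_field_diff_le:
  assumes "field_regular B \<Lambda> t" "0 \<le> \<Lambda>" "i \<in> G" "k \<in> G" "0 < I"
  shows "\<bar>rel_vel t i \<bullet> (external_field t i - external_field t k)\<bar>
    \<le> \<Lambda> * (I * (rel_vel t i \<bullet> rel_vel t i) / 2 + (rel_pos t i \<bullet> rel_pos t i + rel_pos t k \<bullet> rel_pos t k) / I)"
proof -
  define r where "r = norm (rel_pos t i) + norm (rel_pos t k)"
  have "norm (external_field t i - external_field t k) \<le> \<Lambda> * norm (rel_pos t i - rel_pos t k)"
    using assms by (simp add: field_regular_def rel_pos_def)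
  also have "\<dots> \<le> \<Lambda> * r"
    unfolding r_def using assms(2) by (intro mult_left_mono norm_triangle_ineq4)
  finally have field_term:
      "\<bar>rel_vel t i \<bullet> (external_field t i - external_field t k)\<bar> \<le> \<Lambda> * (norm (rel_vel t i) * r)"
    by (intro order_trans[OF Cauchy_Schwarz_ineq2])
      (metis mult.left_commute mult_left_mono norm_ge_zero)
  have "2 * (norm (rel_vel t i) * r) \<le> I * (rel_vel t i \<bullet> rel_vel t i) + r\<^sup>2 / I"
    using two_abs_inner_le[OF assms(5), of "norm (rel_vel t i)" r] r_def
    by (simp add: power2_eq_square dot_square_norm)
  moreover have "r\<^sup>2 / I \<le> 2 * ((rel_pos t i \<bullet> rel_pos t i + rel_pos t k \<bullet> rel_pos t k) / I)"
    unfolding r_def dot_square_norm times_divide_eq_right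
    using assms(5) sum_squares_bound[of "norm (rel_pos t i)" "norm (rel_pos t k)"]
    by (intro divide_right_mono) (auto simp: power2_sum)
  ultimately have "norm (rel_vel t i) * r
      \<le> I * (rel_vel t i \<bullet> rel_vel t i) / 2 + (rel_pos t i \<bullet> rel_pos t i + rel_pos t k \<bullet> rel_pos t k) / I"
    by linarith
  then show ?thesis
    using field_term assms(2) by (meson mult_left_mono order_trans)
qed

lemma energy'_ge:
  assumes "t \<in> {t0..<T}" "field_regular B \<Lambda> t" "0 \<le> \<Lambda>" "k \<in> G"
  shows "- (\<Lambda> * (inertia t * kinetic t + 1 + mass / m k)) \<le> energy' t"
proof -
  define I where "I = inertia t"
  have I: "0 < I"
    using inertia_pos[OF assms(1)] by (simp add: I_def)
  have "energy' t = (\<Sum>i\<in>G. m i * (rel_vel t i \<bullet> (external_field t i - external_field t k)))"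
    using sum_weighted_inner_eq_0[OF sum_weighted_rel_vel, of t "external_field t k"]
    by (simp add: energy'_def inner_diff_right right_diff_distrib sum_subtractf)
  then have "\<bar>energy' t\<bar> \<le> (\<Sum>i\<in>G. \<bar>m i * (rel_vel t i \<bullet> (external_field t i - external_field t k))\<bar>)"
    by (simp only: sum_abs)
  also have "\<dots> \<le> (\<Sum>i\<in>G. m i * (\<Lambda> * (I * (rel_vel t i \<bullet> rel_vel t i) / 2
            + (rel_pos t i \<bullet> rel_pos t i + rel_pos t k \<bullet> rel_pos t k) / I)))"
  proof (rule sum_mono)
    fix i assume "i \<in> G"
    then show "\<bar>m i * (rel_vel t i \<bullet> (external_field t i - external_field t k))\<bar>
        \<le> m i * (\<Lambda> * (I * (rel_vel t i \<bullet> rel_vel t i) / 2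
            + (rel_pos t i \<bullet> rel_pos t i + rel_pos t k \<bullet> rel_pos t k) / I))"
      using rel_vel_inner_field_diff_le[OF assms(2,3) _ assms(4) I] m_pos
      by (simp add: abs_mult abs_of_pos mult_left_mono less_imp_le)
  qed
  also have "\<dots> = (\<Sum>i\<in>G. (\<Lambda> * I / 2) * (m i * (rel_vel t i \<bullet> rel_vel t i))
      + (\<Lambda> / I) * (m i * (rel_pos t i \<bullet> rel_pos t i)) + (\<Lambda> * (rel_pos t k \<bullet> rel_pos t k) / I) * m i)"
    using I by (intro sum.cong refl) (simp add: field_simps)
  also have "\<dots> = (\<Lambda> * I / 2) * (\<Sum>i\<in>G. m i * (rel_vel t i \<bullet> rel_vel t i)) + (\<Lambda> / I) * inertia t
      + (\<Lambda> * (rel_pos t k \<bullet> rel_pos t k) / I) * mass"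
    by (simp add: sum.distrib sum_distrib_left inertia_def mass_def)
  also have "\<dots> = \<Lambda> * (I * kinetic t + inertia t / I + mass * (rel_pos t k \<bullet> rel_pos t k) / I)"
    using I by (simp add: kinetic_def field_simps)
  also have "\<dots> \<le> \<Lambda> * (inertia t * kinetic t + 1 + mass / m k)"
  proof -
    have "m k * (rel_pos t k \<bullet> rel_pos t k) \<le> I"
      unfolding I_def by (rule weighted_rel_pos_le_inertia[OF assms(4)])
    then have "mass * (rel_pos t k \<bullet> rel_pos t k) / I \<le> mass / m k"
      using I m_pos[OF assms(4)] mass_pos by (simp add: field_simps mult_left_mono)
    then show ?thesis
      using I assms(3) by (intro mult_left_mono) (simp_all add: I_def)
  qed
  finally show ?thesis
    by linarith
qed

lemma self_potential_ge:
  assumes "i \<in> G" "j \<in> G" "i \<noteq> j"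
  shows "m i * m j / norm (q t i - q t j) \<le> self_potential t"
proof -
  define f where "f a b = m a * m b / norm (q t a - q t b)" for a b
  have f_nonneg: "0 \<le> f a b" if "a \<in> G" "b \<in> G" for a b
    unfolding f_def using m_pos that by (simp add: less_imp_le)
  have "f i j + f j i \<le> (\<Sum>b\<in>G. f i b) + (\<Sum>b\<in>G. f j b)"
    using assms finite_G f_nonneg by (intro add_mono member_le_sum) auto
  also have "\<dots> = (\<Sum>a\<in>{i, j}. \<Sum>b\<in>G. f a b)"
    using assms(3) by simp
  also have "\<dots> \<le> (\<Sum>a\<in>G. \<Sum>b\<in>G. f a b)"
    using assms finite_G f_nonneg by (intro sum_mono2 sum_nonneg) auto
  finally show ?thesis
    unfolding self_potential_def f_def by (simp add: norm_minus_commute mult.commute)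
qed

lemma self_potential_tendsto_infinity: "filterlim self_potential at_top (at_left T)"
proof -
  obtain i j where ij: "i \<in> G" "j \<in> G" "i \<noteq> j"
    by (rule obtain_two_in_G)
  have "((\<lambda>t. norm (q t i - q t j)) \<longlongrightarrow> 0) (at_left T)"
    using tendsto_norm[OF tendsto_diff[OF q_tendsto[OF ij(1)] q_tendsto[OF ij(2)]]] by simp
  moreover have "eventually (\<lambda>t. 0 < norm (q t i - q t j)) (at_left T)"
    using eventually_at_left_real[OF t0T]
    by (rule eventually_mono) (use nocoll[of i j] ij Gsub in \<open>auto simp: subset_eq\<close>)
  ultimately have "filterlim (\<lambda>t. inverse (norm (q t i - q t j))) at_top (at_left T)"
    by (rule filterlim_inverse_at_top)
  then have "filterlim (\<lambda>t. m i * m j * inverse (norm (q t i - q t j))) at_top (at_left T)"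
    using m_pos ij by (intro filterlim_tendsto_pos_mult_at_top[OF tendsto_const]) auto
  then show ?thesis
    by (rule filterlim_at_top_mono)
      (use self_potential_ge[OF ij] in \<open>simp add: divide_inverse\<close>)
qed

section \<open>Growth of the moment of inertia\<close>

definition "lyapunov \<Lambda> t = energy t + \<Lambda> * (inertia t * inertia' t)"

definition "close_approach B \<Lambda> t \<longleftrightarrow>
  field_regular B \<Lambda> t \<and> (\<forall>i\<in>G. norm (rel_pos t i) \<le> 1) \<and> inertia t \<le> 1"

lemma eventually_close_approach:
  assumes "eventually (field_regular B \<Lambda>) (at_left T)"
  shows "eventually (close_approach B \<Lambda>) (at_left T)"
proof -
  have "eventually (\<lambda>t. norm (rel_pos t i) \<le> 1) (at_left T)" if "i \<in> G" for i
    using order_tendstoD(2)[OF tendsto_norm_zero[OF rel_pos_tendsto[OF that]], of 1]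
    by (auto elim: eventually_mono)
  then have "eventually (\<lambda>t. \<forall>i\<in>G. norm (rel_pos t i) \<le> 1) (at_left T)"
    by (simp add: eventually_ball_finite_distrib finite_G)
  moreover have "eventually (\<lambda>t. inertia t < 1) (at_left T)"
    using order_tendstoD(2)[OF inertia_tendsto] by simp
  ultimately show ?thesis
    using assms unfolding close_approach_def by eventually_elim auto
qed

lemma has_real_derivative_lyapunov:
  assumes "t \<in> {t0..<T}"
  shows "(lyapunov \<Lambda> has_real_derivative
      energy' t + \<Lambda> * (inertia t * inertia'' t + inertia' t * inertia' t)) (at t within {t0..<T})"
  unfolding has_real_derivative_iff_has_vector_derivative lyapunov_def[abs_def]
  using assms
  by (intro has_vector_derivative_add has_vector_derivative_energy has_vector_derivative_mult_right
      has_vector_derivative_mult has_vector_derivative_inertia has_vector_derivative_inertia')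

text \<open>The term \<open>\<Lambda> I I'\<close> absorbs the exchange of energy with the external field, which is
  only bounded by \<open>\<Lambda> I K\<close> and so possibly unbounded.\<close>
lemma lyapunov_derivative_ge:
  assumes "t \<in> {t0..<T}" "close_approach B \<Lambda> t" "0 < \<Lambda>" "k \<in> G"
  shows "- (\<Lambda> * (1 + mass / m k + 2 * mass * B) + 2 * \<Lambda>\<^sup>2 * (4 * \<Lambda> + 1))
      + 2 * \<Lambda> * inertia t * lyapunov \<Lambda> t
    \<le> energy' t + \<Lambda> * (inertia t * inertia'' t + inertia' t * inertia' t)"
proof -
  define I K D where "I = inertia t" and "K = kinetic t" and "D = inertia' t"
  have I: "0 < I" "I \<le> 1"
    using inertia_pos[OF assms(1)] assms(2) by (simp_all add: I_def close_approach_def)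
  have energy': "0 \<le> energy' t + \<Lambda> * (I * K + 1 + mass / m k)"
    using energy'_ge[of t B \<Lambda> k] assms by (simp add: I_def K_def close_approach_def)
  have "\<bar>I * external_virial t\<bar> \<le> 1 * (2 * mass * B)"
    using abs_external_virial_le[of B \<Lambda> t] assms(2) I
    unfolding abs_mult by (intro mult_mono) (auto simp: close_approach_def)
  then have virial: "0 \<le> \<Lambda> * (I * external_virial t + 2 * mass * B)"
    using assms(3) by (intro mult_nonneg_nonneg) auto
  have "\<Lambda> * I * D \<le> \<Lambda> * (4 * \<Lambda> + 1) + K / 2"
    using inertia_mult_inertia'_le[OF assms(3)] I by (simp add: I_def D_def K_def)
  then have product: "0 \<le> 2 * \<Lambda> * I * (\<Lambda> * (4 * \<Lambda> + 1) + K / 2) - 2 * \<Lambda> * I * (\<Lambda> * I * D)"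
    using assms(3) I by (simp add: mult_left_mono)
  have small_I: "0 \<le> 2 * \<Lambda> * (\<Lambda> * (4 * \<Lambda> + 1)) - 2 * \<Lambda> * I * (\<Lambda> * (4 * \<Lambda> + 1))"
    using assms(3) I by (simp add: mult_left_le)
  have "energy' t + \<Lambda> * (inertia t * inertia'' t + inertia' t * inertia' t)
      - (- (\<Lambda> * (1 + mass / m k + 2 * mass * B) + 2 * \<Lambda>\<^sup>2 * (4 * \<Lambda> + 1))
        + 2 * \<Lambda> * inertia t * lyapunov \<Lambda> t)
      = (energy' t + \<Lambda> * (I * K + 1 + mass / m k)) + \<Lambda> * (I * external_virial t + 2 * mass * B)
        + \<Lambda> * (D * D)
        + (2 * \<Lambda> * I * (\<Lambda> * (4 * \<Lambda> + 1) + K / 2) - 2 * \<Lambda> * I * (\<Lambda> * I * D))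
        + (2 * \<Lambda> * (\<Lambda> * (4 * \<Lambda> + 1)) - 2 * \<Lambda> * I * (\<Lambda> * (4 * \<Lambda> + 1)))"
    by (simp add: I_def K_def D_def lyapunov_def energy_def inertia''_def power2_eq_square
        algebra_simps)
  moreover have "0 \<le> \<Lambda> * (D * D)"
    using assms(3) by simp
  ultimately show ?thesis
    using energy' virial product small_I by linarith
qed

lemma eventually_lyapunov_ge:
  assumes "0 \<le> B" "0 < \<Lambda>" "eventually (field_regular B \<Lambda>) (at_left T)"
  obtains c where "eventually (\<lambda>t. c \<le> lyapunov \<Lambda> t) (at_left T)"
proof -
  obtain k where "k \<in> G"
    using obtain_two_in_G by metis
  show ?thesis
  proof (rule eventually_lower_bound_of_differential_inequality[OF t0T has_real_derivative_lyapunov])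
    show "eventually (\<lambda>t. - (\<Lambda> * (1 + mass / m k + 2 * mass * B) + 2 * \<Lambda>\<^sup>2 * (4 * \<Lambda> + 1))
        + 2 * \<Lambda> * inertia t * lyapunov \<Lambda> t
        \<le> energy' t + \<Lambda> * (inertia t * inertia'' t + inertia' t * inertia' t)
      \<and> 0 \<le> 2 * \<Lambda> * inertia t \<and> 2 * \<Lambda> * inertia t \<le> 2 * \<Lambda>) (at_left T)"
      using eventually_conj[OF eventually_close_approach[OF assms(3)] eventually_at_left_real[OF t0T]]
    proof (rule eventually_mono)
      fix t assume t: "close_approach B \<Lambda> t \<and> t \<in> {t0<..<T}"
      then show "- (\<Lambda> * (1 + mass / m k + 2 * mass * B) + 2 * \<Lambda>\<^sup>2 * (4 * \<Lambda> + 1))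
          + 2 * \<Lambda> * inertia t * lyapunov \<Lambda> t
          \<le> energy' t + \<Lambda> * (inertia t * inertia'' t + inertia' t * inertia' t)
        \<and> 0 \<le> 2 * \<Lambda> * inertia t \<and> 2 * \<Lambda> * inertia t \<le> 2 * \<Lambda>"
        using lyapunov_derivative_ge[of t B \<Lambda> k] \<open>k \<in> G\<close> assms(2) inertia_nonneg[of t]
        by (auto simp: close_approach_def)
    qed
    show "0 \<le> \<Lambda> * (1 + mass / m k + 2 * mass * B) + 2 * \<Lambda>\<^sup>2 * (4 * \<Lambda> + 1)"
      using assms(1,2) mass_pos m_pos[OF \<open>k \<in> G\<close>] by (intro add_nonneg_nonneg mult_nonneg_nonneg) auto
  qed (use that in auto)
qed

text \<open>From \<open>E + \<Lambda> I I' \<ge> c\<close> and \<open>\<Lambda> I I' \<le> \<Lambda> (4 \<Lambda> + 1) + K / 2\<close> one gets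
  \<open>K \<ge> 2/3 (U + const)\<close>, and then the Lagrange--Jacobi formula \<open>I'' = 4 K - 2 U + virial\<close>
  yields the claim.\<close>
lemma eventually_inertia''_ge:
  obtains c where "eventually (\<lambda>t. c + 2/3 * self_potential t \<le> inertia'' t) (at_left T)"
proof -
  obtain B \<Lambda> where B: "0 \<le> B" and \<Lambda>: "0 < \<Lambda>" and reg: "eventually (field_regular B \<Lambda>) (at_left T)"
    by (rule eventually_field_regular)
  obtain c where "eventually (\<lambda>t. c \<le> lyapunov \<Lambda> t) (at_left T)"
    using eventually_lyapunov_ge[OF B \<Lambda> reg] by blast
  with eventually_close_approach[OF reg] eventually_at_left_real[OF t0T]
  have "eventually (\<lambda>t. 8/3 * (c - \<Lambda> * (4 * \<Lambda> + 1)) - 2 * mass * B + 2/3 * self_potential t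
      \<le> inertia'' t) (at_left T)"
  proof eventually_elim
    case (elim t)
    then have "\<Lambda> * inertia t * inertia' t \<le> \<Lambda> * (4 * \<Lambda> + 1) + kinetic t / 2"
      using inertia_mult_inertia'_le[OF \<Lambda>] inertia_pos[of t] by (auto simp: close_approach_def)
    moreover have "\<bar>external_virial t\<bar> \<le> 2 * mass * B"
      using abs_external_virial_le elim by (auto simp: close_approach_def)
    ultimately show ?case
      using elim(3) by (simp add: lyapunov_def energy_def inertia''_def algebra_simps abs_le_iff)
  qed
  then show ?thesis
    by (rule that)
qed

lemma eventually_inertia_ge:
  assumes "0 \<le> A"
  shows "eventually (\<lambda>t. A * (T - t)\<^sup>2 \<le> inertia t) (at_left T)"
proof (rule eventually_convex_vanishing_at_left_lower_bound[OF t0T _ _ _ assms _ inertia_tendsto])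
  show "(inertia has_real_derivative inertia' s) (at s within {t0..<T})"
    and "(inertia' has_real_derivative inertia'' s) (at s within {t0..<T})" if "s \<in> {t0..<T}" for s
    using that
    by (simp_all add: has_real_derivative_iff_has_vector_derivative
        has_vector_derivative_inertia has_vector_derivative_inertia')
  obtain c where "eventually (\<lambda>t. c + 2/3 * self_potential t \<le> inertia'' t) (at_left T)"
    by (rule eventually_inertia''_ge)
  moreover have "eventually (\<lambda>t. 3 * A - 3/2 * c \<le> self_potential t) (at_left T)"
    using self_potential_tendsto_infinity by (simp add: filterlim_at_top)
  ultimately show "eventually (\<lambda>s. 2 * A \<le> inertia'' s) (at_left T)"
    by eventually_elim linarith
qed (simp add: inertia_nonneg)

lemma eventually_norm_center_diff_le:
  obtains C where "eventually (\<lambda>t. norm (center t - LG) \<le> C * (T - t)) (at_left T)"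
proof -
  obtain B \<Lambda> where reg: "eventually (field_regular B \<Lambda>) (at_left T)"
    using eventually_field_regular by metis
  have "eventually (\<lambda>t. norm (center_acc t) \<le> B) (at_left T)"
    using eventually_conj[OF reg eventually_at_left_real[OF t0T]]
    by (rule eventually_mono) (auto intro: norm_center_acc_le)
  then obtain t1 where "t1 < T"
    and vel_lip: "\<And>s t. s \<in> {t1..<T} \<Longrightarrow> t \<in> {t1..<T} \<Longrightarrow>
      norm (center_vel s - center_vel t) \<le> B * \<bar>s - t\<bar>"
    using eventually_lipschitz_of_derivative_bound[OF t0T has_vector_derivative_center_vel] by blast
  define C where "C = norm (center_vel t1) + \<bar>B\<bar> * (T - t1)"
  have "norm (center_vel t) \<le> C" if "t \<in> {t1..<T}" for t
  proof -
    have "norm (center_vel t) \<le> norm (center_vel t1) + norm (center_vel t - center_vel t1)"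
      by (rule norm_triangle_sub)
    also have "norm (center_vel t - center_vel t1) \<le> \<bar>B\<bar> * (T - t1)"
      using vel_lip[OF that, of t1] that \<open>t1 < T\<close>
      by (smt (verit, best) atLeastLessThan_iff abs_ge_self abs_of_nonneg mult_mono)
    finally show ?thesis
      by (simp add: C_def)
  qed
  then have "eventually (\<lambda>t. norm (center_vel t) \<le> C) (at_left T)"
    by (intro eventually_mono[OF eventually_at_left_real[OF \<open>t1 < T\<close>]]) auto
  then obtain t2 where "t2 < T"
    and lip: "\<And>s t. s \<in> {t2..<T} \<Longrightarrow> t \<in> {t2..<T} \<Longrightarrow> norm (center s - center t) \<le> C * \<bar>s - t\<bar>"
    using eventually_lipschitz_of_derivative_bound[OF t0T has_vector_derivative_center] by blast
  have "norm (center t - LG) \<le> C * (T - t)" if "t \<in> {t2..<T}" for t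
    using that lip by (intro norm_diff_limit_le_of_lipschitz[OF center_tendsto]) auto
  then show ?thesis
    by (intro that[of C] eventually_mono[OF eventually_at_left_real[OF \<open>t2 < T\<close>]]) auto
qed

lemma cluster_r_eq: "cluster_r m G (q t) = sqrt (inertia t)"
  by (simp add: cluster_r_def inertia_def rel_pos_def center_def power2_norm_eq_inner)

lemma cluster_J_eq: "cluster_J m G L (q t) = inertia t + mass * (norm (center t - LG))\<^sup>2"
proof -
  define y where "y = center t - LG"
  have "cluster_J m G L (q t) = (\<Sum>i\<in>G. m i * ((rel_pos t i + y) \<bullet> (rel_pos t i + y)))"
    unfolding cluster_J_def y_def by (intro sum.cong refl) (simp add: Gin rel_pos_def power2_norm_eq_inner)
  also have "\<dots> = (\<Sum>i\<in>G. m i * (rel_pos t i \<bullet> rel_pos t i) + 2 * (m i * (rel_pos t i \<bullet> y)) + m i * (y \<bullet> y))"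
    by (intro sum.cong refl) (simp add: inner_add_left inner_add_right inner_commute algebra_simps)
  also have "\<dots> = inertia t + 2 * (\<Sum>i\<in>G. m i * (rel_pos t i \<bullet> y)) + mass * (y \<bullet> y)"
    by (simp add: inertia_def mass_def sum.distrib sum_distrib_left sum_distrib_right)
  also have "(\<Sum>i\<in>G. m i * (rel_pos t i \<bullet> y)) = 0"
    by (rule sum_weighted_inner_eq_0[OF sum_weighted_rel_pos])
  finally show ?thesis
    by (simp add: y_def power2_norm_eq_inner)
qed

lemma time_to_collision_inertia_ratio_tendsto: "((\<lambda>t. (T - t)\<^sup>2 / inertia t) \<longlongrightarrow> 0) (at_left T)"
proof (rule order_tendstoI)
  fix \<epsilon> :: real
  assume "0 < \<epsilon>"
  have "eventually (\<lambda>t. 2 / \<epsilon> * (T - t)\<^sup>2 \<le> inertia t \<and> t \<in> {t0<..<T}) (at_left T)"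
    using \<open>0 < \<epsilon>\<close> by (intro eventually_conj eventually_inertia_ge eventually_at_left_real t0T) simp
  then show "eventually (\<lambda>t. (T - t)\<^sup>2 / inertia t < \<epsilon>) (at_left T)"
  proof (rule eventually_mono)
    fix t assume t: "2 / \<epsilon> * (T - t)\<^sup>2 \<le> inertia t \<and> t \<in> {t0<..<T}"
    then have "0 < inertia t" "0 < (T - t)\<^sup>2"
      using inertia_pos by auto
    have "2 * (T - t)\<^sup>2 \<le> \<epsilon> * inertia t"
      using t \<open>0 < \<epsilon>\<close> by (simp add: field_simps)
    then have "(T - t)\<^sup>2 < \<epsilon> * inertia t"
      using \<open>0 < (T - t)\<^sup>2\<close> by linarith
    then show "(T - t)\<^sup>2 / inertia t < \<epsilon>"
      using \<open>0 < inertia t\<close> by (simp add: pos_divide_less_eq)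
  qed
next
  fix a :: real
  assume "a < 0"
  have "0 \<le> (T - t)\<^sup>2 / inertia t" for t
    by (simp add: inertia_nonneg)
  then show "eventually (\<lambda>t. a < (T - t)\<^sup>2 / inertia t) (at_left T)"
    using \<open>a < 0\<close> by (intro always_eventually allI) (rule order.strict_trans2)
qed

lemma center_offset_ratio_tendsto:
  "((\<lambda>t. mass * (norm (center t - LG))\<^sup>2 / inertia t) \<longlongrightarrow> 0) (at_left T)"
proof -
  obtain C where C: "eventually (\<lambda>t. norm (center t - LG) \<le> C * (T - t)) (at_left T)"
    by (rule eventually_norm_center_diff_le)
  have upper_tendsto: "((\<lambda>t. mass * C\<^sup>2 * ((T - t)\<^sup>2 / inertia t)) \<longlongrightarrow> 0) (at_left T)"
    using tendsto_mult_right_zero[OF time_to_collision_inertia_ratio_tendsto] .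
  have lower: "eventually (\<lambda>t. 0 \<le> mass * (norm (center t - LG))\<^sup>2 / inertia t) (at_left T)"
    using mass_pos inertia_nonneg by (intro always_eventually allI) simp
  have upper: "eventually (\<lambda>t. mass * (norm (center t - LG))\<^sup>2 / inertia t
      \<le> mass * C\<^sup>2 * ((T - t)\<^sup>2 / inertia t)) (at_left T)"
    using C eventually_at_left_real[OF t0T]
  proof eventually_elim
    case (elim t)
    have "(norm (center t - LG))\<^sup>2 \<le> (C * (T - t))\<^sup>2"
      using elim(1) by (intro power_mono) auto
    then have "mass * (norm (center t - LG))\<^sup>2 / inertia t \<le> mass * (C * (T - t))\<^sup>2 / inertia t"
      using mass_pos inertia_nonneg[of t] by (intro divide_right_mono mult_left_mono) auto
    then show ?case
      by (simp add: power_mult_distrib)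
  qed
  show ?thesis
    by (rule tendsto_sandwich[OF lower upper tendsto_const upper_tendsto])
qed

lemma cluster_ratio_tendsto:
  "((\<lambda>t. cluster_r m G (q t) / sqrt (cluster_J m G L (q t))) \<longlongrightarrow> 1) (at_left T)"
proof -
  have "((\<lambda>t. sqrt (1 / (1 + mass * (norm (center t - LG))\<^sup>2 / inertia t))) \<longlongrightarrow> sqrt (1 / (1 + 0)))
      (at_left T)"
    by (intro tendsto_intros center_offset_ratio_tendsto) simp
  moreover have "eventually (\<lambda>t. sqrt (1 / (1 + mass * (norm (center t - LG))\<^sup>2 / inertia t))
      = cluster_r m G (q t) / sqrt (cluster_J m G L (q t))) (at_left T)"
    using eventually_at_left_real[OF t0T]
  proof (rule eventually_mono)
    fix t assume "t \<in> {t0<..<T}"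
    then have "0 < inertia t"
      using inertia_pos by auto
    then have "1 / (1 + mass * (norm (center t - LG))\<^sup>2 / inertia t)
        = inertia t / (inertia t + mass * (norm (center t - LG))\<^sup>2)"
      by (simp add: field_simps)
    then show "sqrt (1 / (1 + mass * (norm (center t - LG))\<^sup>2 / inertia t))
        = cluster_r m G (q t) / sqrt (cluster_J m G L (q t))"
      by (simp add: cluster_r_eq cluster_J_eq real_sqrt_divide)
  qed
  ultimately show ?thesis
    using tendsto_cong by force
qed

end

theorem lemmaB4:
  fixes n :: nat and m :: "nat \<Rightarrow> real" and q :: "real \<Rightarrow> nat \<Rightarrow> real^'d"
    and v a :: "real \<Rightarrow> nat \<Rightarrow> real^'d" and L :: "nat \<Rightarrow> real^'d"
    and t0 T :: real and G :: "nat set" and LG :: "real^'d"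
  assumes dim: "CARD('d) = 2 \<or> CARD('d) = 3"
    and n2: "n \<ge> 2"
    and mpos: "\<And>i. i < n \<Longrightarrow> m i > 0"
    and t0T: "t0 < T"
    and vel: "\<And>i t. i < n \<Longrightarrow> t \<in> {t0..<T} \<Longrightarrow>
                 ((\<lambda>s. q s i) has_vector_derivative v t i) (at t within {t0..<T})"
    and acc: "\<And>i t. i < n \<Longrightarrow> t \<in> {t0..<T} \<Longrightarrow>
                 ((\<lambda>s. v s i) has_vector_derivative a t i) (at t within {t0..<T})"
    and newton: "\<And>i t. i < n \<Longrightarrow> t \<in> {t0..<T} \<Longrightarrow>
                 partial_grad_U n m (q t) i (m i *\<^sub>R a t i)"
    and nocoll: "\<And>i j t. i < n \<Longrightarrow> j < n \<Longrightarrow> i \<noteq> j \<Longrightarrow> t \<in> {t0..<T} \<Longrightarrow> q t i \<noteq> q t j"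
    and lim: "\<And>i. i < n \<Longrightarrow> ((\<lambda>t. q t i) \<longlongrightarrow> L i) (at_left T)"
    and Gsub: "G \<subseteq> {..<n}" and Gcard: "card G \<ge> 2"
    and Gin: "\<And>i. i \<in> G \<Longrightarrow> L i = LG"
    and Gout: "\<And>j. j < n \<Longrightarrow> j \<notin> G \<Longrightarrow> L j \<noteq> LG"
  shows "((\<lambda>t. cluster_r m G (q t) / sqrt (cluster_J m G L (q t))) \<longlongrightarrow> 1) (at_left T)"
proof -
  interpret nbody_cluster n m q v a L t0 T G LG
    by (rule nbody_cluster.intro[OF mpos t0T vel acc newton nocoll lim Gsub Gcard Gin Gout])
  show ?thesis
    by (rule cluster_ratio_tendsto)
qed

end
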